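(* Let $\mathcal{H}$ be a real Hilbert space, let $r\geq 1$, and let $A_i:\mathcal{H}\rightrightarrows\mathcal{H}$ be maximally monotone operators for $i=1,\ldots,r$. Let $\gamma>0$ and let $(\lambda_n)_{n=0}^\infty$ be a sequence in $[0,1]$ with $\sum_{n\geq0}\lambda_n(1-\lambda_n)=+\infty$. Let $\beta\in{]0,1[}$ and suppose $q\in\operatorname{ran}\left(\operatorname{Id}+\frac{\gamma}{2r(1-\beta)}\sum_{i=1}^rA_i\right)$. Given $x_{1,0},\ldots,x_{r,0}\in\mathcal{H}$, define for $n=0,1,2,\ldots$ \[ p_n=\frac{1}{r}\sum_{i=1}^r x_{i,n},\qquad x_{i,n+1}=(1-\lambda_n)x_{i,n}+\lambda_n\left(2\beta J_{(\gamma(A_i)_{-q})}-\operatorname{Id}\right)\left(2\beta p_n-x_{i,n}\right),\quad i=1,\ldots,r. \] Then: (i) $(x_{i,n+1}-x_{i,n})_{n=0}^\infty$ converges strongly to $0$ for all $i$; (ii) for each $i$, $(x_{i,n})_{n=0}^\infty$ converges weakly to some $x_i^\star\in\mathcal{H}$, and $q+\frac{1}{r}\sum_{i=1}^r x_i^\star=J_{\frac{\gamma}{2r(1-\beta)}\sum_{i=1}^rA_i}(q)$; (iii) $(q+p_n)_{n=0}^\infty$ converges strongly to $J_{\frac{\gamma}{2r(1-\beta)}\sum_{i=1}^rA_i}(q)$.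
   Context: For an operator $T:\mathcal{H}\rightrightarrows\mathcal{H}$, the resolvent is $J_T:=(\operatorname{Id}+T)^{-1}$; for maximally monotone $T$ it is single-valued with full domain. For $w\in\mathcal{H}$, the inner $w$-perturbation is $T_w(x):=T(x-w)$; thus $\gamma(A_i)_{-q}$ denotes $x\mapsto\gamma A_i(x+q)$. $\operatorname{ran}$ denotes the range. *)

theory Defs
  imports "HOL-Analysis.Analysis"
begin

text \<open>Set-valued operators on a real Hilbert space are modelled as functions 'a \<Rightarrow> 'a set;
  the graph of T is the set of pairs (x,u) with u \<in> T x.\<close>

definition monotone_op :: "('a::real_inner \<Rightarrow> 'a set) \<Rightarrow> bool" where
  "monotone_op T \<longleftrightarrow> (\<forall>x y u v. u \<in> T x \<longrightarrow> v \<in> T y \<longrightarrow> 0 \<le> (x - y) \<bullet> (u - v))"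

definition maximal_monotone :: "('a::real_inner \<Rightarrow> 'a set) \<Rightarrow> bool" where
  "maximal_monotone T \<longleftrightarrow> monotone_op T \<and>
     (\<forall>S. monotone_op S \<and> (\<forall>x. T x \<subseteq> S x) \<longrightarrow> S = T)"

text \<open>Resolvent J_T = (Id + T)^{-1}, evaluated at x (single-valued where used).\<close>
definition resolvent :: "('a::real_inner \<Rightarrow> 'a set) \<Rightarrow> 'a \<Rightarrow> 'a" where
  "resolvent T x = (THE y. x - y \<in> T y)"

definition ran_id_plus :: "('a::real_inner \<Rightarrow> 'a set) \<Rightarrow> 'a set" where
  "ran_id_plus T = {y + u | y u. u \<in> T y}"

definition scale_op :: "real \<Rightarrow> ('a::real_inner \<Rightarrow> 'a set) \<Rightarrow> 'a \<Rightarrow> 'a set" where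
  "scale_op c T x = (\<lambda>u. c *\<^sub>R u) ` T x"

definition perturb_op :: "'a \<Rightarrow> ('a::real_inner \<Rightarrow> 'a set) \<Rightarrow> 'a \<Rightarrow> 'a set" where
  "perturb_op w T x = T (x - w)"

definition sum_op :: "nat \<Rightarrow> (nat \<Rightarrow> 'a::real_inner \<Rightarrow> 'a set) \<Rightarrow> 'a \<Rightarrow> 'a set" where
  "sum_op r A x = {(\<Sum>i<r. u i) | u. \<forall>i<r. u i \<in> A i x}"

definition weak_conv :: "(nat \<Rightarrow> 'a::real_inner) \<Rightarrow> 'a \<Rightarrow> bool" where
  "weak_conv x L \<longleftrightarrow> (\<forall>y. (\<lambda>n. x n \<bullet> y) \<longlonglongrightarrow> L \<bullet> y)"

end

(* In the space of r-tuples the iteration is the relaxed fixed-point iteration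
   X (n+1) = (1 - lam n) X n + lam n T (X n)  with  T v i = (2 beta J_i - Id) (2 beta mean v - v i),
   J_i the resolvent of gamma (A_i)_{-q}.  Firm nonexpansiveness of the J_i makes T nonexpansive
   for the squared distance of tuples, with the extra gain 4 beta (1 - beta) r |mean a - mean b|^2.
   A tuple is a fixed point iff J_i (2 beta m - v i) = m for its mean m and all i; summing the
   resolvent relations shows q + m = J q for the resolvent J of gamma / (2 r (1 - beta)) Sum A_i,
   and the range hypothesis on q provides a fixed point.  Fejer monotonicity then gives
   Sum lam (1 - lam) |T X - X|^2 < oo and Sum lam |p - m|^2 < oo.  The residual |T X - X| is
   nonincreasing, hence tends to 0, which yields (i); the increments of |p n - m| are O(lam n),
   which together with Sum lam = oo forces p n --> m, which is (iii).  Opial's argument yields (ii),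
   weak cluster points being fixed points by demiclosedness of maximally monotone operators.
   Minty's theorem, the Riesz representation, orthogonal projection and weak sequential
   compactness are all derived from one fact: a convex set lying below the paraboloid
   c = |p|^2 lies below one of its tangent hyperplanes. *)

theory Submission
  imports Defs "HOL-Library.Diagonal_Subsequence"
begin

section \<open>Convexity and the Hilbert-space tools\<close>

lemma norm_sq_convex_combination:
  fixes a b :: "'a::real_inner"
  shows "(norm ((1 - t) *\<^sub>R a + t *\<^sub>R b))\<^sup>2
    = (1 - t) * (norm a)\<^sup>2 + t * (norm b)\<^sup>2 - t * (1 - t) * (norm (a - b))\<^sup>2"
  unfolding power2_norm_eq_inner by (simp add: inner_simps algebra_simps)

lemma nonneg_if_nonneg_add_small:
  fixes a b :: real
  assumes "\<And>t. 0 < t \<Longrightarrow> t \<le> 1 \<Longrightarrow> 0 \<le> a + t * b"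
  shows "0 \<le> a"
proof -
  have "((\<lambda>t. a + t * b) \<longlongrightarrow> a + 0 * b) (at_right 0)"
    by (intro tendsto_intros)
  moreover have "\<forall>\<^sub>F t in at_right 0. 0 \<le> a + t * b"
    using eventually_at_right_real[of 0 1] by (rule eventually_mono) (use assms in auto)
  ultimately show ?thesis
    by (intro tendsto_lowerbound) auto
qed

lemma eq_if_scaled_le:
  fixes a b C :: real
  assumes "\<And>t. t * a \<le> t * b + C"
  shows "a = b"
proof (rule ccontr)
  assume "a \<noteq> b"
  define t where "t = (\<bar>C\<bar> + 1) / (a - b)"
  have "t * a - t * b = t * (a - b)" by (simp add: algebra_simps)
  also have "\<dots> = \<bar>C\<bar> + 1" using \<open>a \<noteq> b\<close> by (simp add: t_def)
  finally show False using assms[of t] by linarith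
qed

lemma minimizing_sequence_convergent:
  fixes f :: "'b::real_vector \<Rightarrow> real" and g :: "'b \<Rightarrow> 'a::{real_normed_vector,complete_space}"
  assumes C: "convex C" "C \<noteq> {}" and bdd: "bdd_below (f ` C)" and \<kappa>: "\<kappa> > 0"
    and mid: "\<And>u v. u \<in> C \<Longrightarrow> v \<in> C \<Longrightarrow>
      f ((1/2) *\<^sub>R u + (1/2) *\<^sub>R v) \<le> (f u + f v) / 2 - \<kappa> * (norm (g u - g v))\<^sup>2"
  shows "\<exists>s. (\<forall>n. s n \<in> C) \<and> (\<lambda>n. f (s n)) \<longlonglongrightarrow> (INF u\<in>C. f u) \<and> convergent (\<lambda>n. g (s n))"
proof -
  define \<eta> where "\<eta> = (INF u\<in>C. f u)"
  have low: "\<eta> \<le> f u" if "u \<in> C" for u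
    unfolding \<eta>_def using bdd that by (rule cINF_lower)
  have "\<exists>u\<in>C. f u < \<eta> + inverse (real (Suc n))" for n
    using cINF_less_iff[OF C(2) bdd, of "\<eta> + inverse (real (Suc n))"] by (simp add: \<eta>_def)
  then obtain s where s: "\<And>n. s n \<in> C" "\<And>n. f (s n) < \<eta> + inverse (real (Suc n))"
    by metis
  have "(\<lambda>n. f (s n)) \<longlonglongrightarrow> \<eta>"
  proof (rule real_tendsto_sandwich)
    show "\<forall>\<^sub>F n in sequentially. \<eta> \<le> f (s n)" using low s(1) by simp
    show "\<forall>\<^sub>F n in sequentially. f (s n) \<le> \<eta> + inverse (real (Suc n))"
      using s(2) by (simp add: less_imp_le)
    show "(\<lambda>n. \<eta>) \<longlonglongrightarrow> \<eta>" by (rule tendsto_const)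
    show "(\<lambda>n. \<eta> + inverse (real (Suc n))) \<longlonglongrightarrow> \<eta>" by (rule LIMSEQ_inverse_real_of_nat_add)
  qed
  moreover have "Cauchy (\<lambda>n. g (s n))"
  proof (rule metric_CauchyI)
    fix e :: real assume "e > 0"
    then obtain N where N: "inverse (real (Suc N)) < \<kappa> * e\<^sup>2"
      using reals_Archimedean \<kappa> by (metis mult_pos_pos zero_less_power)
    have "dist (g (s m)) (g (s n)) < e" if "N \<le> m" "N \<le> n" for m n
    proof -
      have "inverse (real (Suc m)) \<le> inverse (real (Suc N))"
        "inverse (real (Suc n)) \<le> inverse (real (Suc N))"
        using that by (simp_all add: le_imp_inverse_le)
      moreover have "\<eta> \<le> f ((1/2) *\<^sub>R s m + (1/2) *\<^sub>R s n)"
        using low convexD[OF C(1) s(1) s(1)] by simp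
      ultimately have "\<kappa> * (norm (g (s m) - g (s n)))\<^sup>2 < \<kappa> * e\<^sup>2"
        using mid[OF s(1) s(1), of m n] s(2)[of m] s(2)[of n] N by argo
      then show ?thesis
        using \<kappa> \<open>e > 0\<close> by (simp add: dist_norm power_less_imp_less_base)
    qed
    then show "\<exists>N. \<forall>m\<ge>N. \<forall>n\<ge>N. dist (g (s m)) (g (s n)) < e" by blast
  qed
  ultimately show ?thesis
    using s(1) unfolding \<eta>_def Cauchy_convergent_iff by blast
qed

lemma tangent_bound_at_minimizing_limit:
  fixes K :: "('a::real_inner \<times> real) set"
  assumes K: "convex K" and \<eta>: "\<And>k. k \<in> K \<Longrightarrow> \<eta> \<le> (norm (fst k))\<^sup>2 - snd k"
    and s: "\<And>n. s n \<in> K" "(\<lambda>n. (norm (fst (s n)))\<^sup>2 - snd (s n)) \<longlonglongrightarrow> \<eta>"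
      "(\<lambda>n. fst (s n)) \<longlonglongrightarrow> w"
    and pc: "(p, c) \<in> K"
  shows "c + \<eta> \<le> 2 * (w \<bullet> p) - (norm w)\<^sup>2"
proof -
  have snd_lim: "(\<lambda>n. snd (s n)) \<longlonglongrightarrow> (norm w)\<^sup>2 - \<eta>"
  proof -
    have "(\<lambda>n. (norm (fst (s n)))\<^sup>2 - ((norm (fst (s n)))\<^sup>2 - snd (s n))) \<longlonglongrightarrow> (norm w)\<^sup>2 - \<eta>"
      by (intro tendsto_diff tendsto_power tendsto_norm s(2,3))
    then show ?thesis by simp
  qed
  have "0 \<le> ((norm p)\<^sup>2 - (norm (w - p))\<^sup>2 - c - \<eta>) + t * (norm (w - p))\<^sup>2"
    if t: "0 < t" "t \<le> 1" for t
  proof -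
    define g where "g n = (norm ((1 - t) *\<^sub>R fst (s n) + t *\<^sub>R p))\<^sup>2 - ((1 - t) * snd (s n) + t * c)"
      for n
    have "\<eta> \<le> g n" for n
      using \<eta>[OF convexD[OF K s(1) pc, of "1 - t" t]] t by (simp add: g_def)
    moreover have "g \<longlonglongrightarrow> (norm ((1 - t) *\<^sub>R w + t *\<^sub>R p))\<^sup>2 - ((1 - t) * ((norm w)\<^sup>2 - \<eta>) + t * c)"
      unfolding g_def by (intro tendsto_intros s(3) snd_lim)
    ultimately have "\<eta> \<le> (norm ((1 - t) *\<^sub>R w + t *\<^sub>R p))\<^sup>2 - ((1 - t) * ((norm w)\<^sup>2 - \<eta>) + t * c)"
      using LIMSEQ_le_const by blast
    also have "\<dots> = \<eta> + t * (((norm p)\<^sup>2 - (norm (w - p))\<^sup>2 - c - \<eta>) + t * (norm (w - p))\<^sup>2)"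
      unfolding norm_sq_convex_combination by (simp add: algebra_simps)
    finally show ?thesis using t by (simp add: zero_le_mult_iff)
  qed
  then have "0 \<le> (norm p)\<^sup>2 - (norm (w - p))\<^sup>2 - c - \<eta>"
    by (rule nonneg_if_nonneg_add_small)
  moreover have "(norm p)\<^sup>2 - (norm (w - p))\<^sup>2 = 2 * (w \<bullet> p) - (norm w)\<^sup>2"
    unfolding power2_norm_eq_inner by (simp add: inner_simps inner_commute)
  ultimately show ?thesis by linarith
qed

text \<open>\<open>c = 2 (w \<bullet> p) - \<parallel>w\<parallel>\<^sup>2\<close> is the tangent hyperplane of the paraboloid
  \<open>c = \<parallel>p\<parallel>\<^sup>2\<close> at \<open>p = w\<close>. The tangency point is the limit of a minimising sequence
  of \<open>\<parallel>p\<parallel>\<^sup>2 - c\<close> on \<open>K\<close>, which converges because this function is uniformly convex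
  in \<open>p\<close>.\<close>

lemma convex_below_paraboloid_imp_below_tangent:
  fixes K :: "('a::{real_inner,complete_space} \<times> real) set"
  assumes K: "convex K" "K \<noteq> {}" and below: "\<And>p c. (p, c) \<in> K \<Longrightarrow> c + b \<le> (norm p)\<^sup>2"
  shows "\<exists>w\<in>closure (fst ` K). \<forall>p c. (p, c) \<in> K \<longrightarrow> c + b \<le> 2 * (w \<bullet> p) - (norm w)\<^sup>2"
proof -
  define f where "f k = (norm (fst k))\<^sup>2 - snd k" for k :: "'a \<times> real"
  define \<eta> where "\<eta> = (INF k\<in>K. f k)"
  have f_lower: "b \<le> f k" if "k \<in> K" for k
    using below[of "fst k" "snd k"] that by (simp add: f_def)
  then have bdd: "bdd_below (f ` K)" by (rule bdd_belowI2)
  have mid: "f ((1/2) *\<^sub>R k + (1/2) *\<^sub>R l) \<le> (f k + f l) / 2 - (1/4) * (norm (fst k - fst l))\<^sup>2"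
    for k l
  proof -
    have "(norm ((1/2) *\<^sub>R fst k + (1/2) *\<^sub>R fst l))\<^sup>2
        = (norm (fst k))\<^sup>2 / 2 + (norm (fst l))\<^sup>2 / 2 - (norm (fst k - fst l))\<^sup>2 / 4"
      using norm_sq_convex_combination[of "1/2" "fst k" "fst l"] by simp
    then show ?thesis by (simp add: f_def)
  qed
  obtain s where s: "\<And>n. s n \<in> K" "(\<lambda>n. f (s n)) \<longlonglongrightarrow> \<eta>" "convergent (\<lambda>n. fst (s n))"
    using minimizing_sequence_convergent[OF K bdd _ mid] unfolding \<eta>_def by auto
  obtain w where w: "(\<lambda>n. fst (s n)) \<longlonglongrightarrow> w" using s(3) by (auto simp: convergent_def)
  have "w \<in> closure (fst ` K)"
    unfolding closure_sequential using s(1) w by (intro exI[of _ "\<lambda>n. fst (s n)"]) auto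
  moreover have "c + b \<le> 2 * (w \<bullet> p) - (norm w)\<^sup>2" if "(p, c) \<in> K" for p c
  proof -
    have "\<eta> \<le> (norm (fst k))\<^sup>2 - snd k" if "k \<in> K" for k
      using cINF_lower[OF bdd that] by (simp add: \<eta>_def f_def)
    moreover have "(\<lambda>n. (norm (fst (s n)))\<^sup>2 - snd (s n)) \<longlonglongrightarrow> \<eta>"
      using s(2) by (simp add: f_def)
    ultimately have "c + \<eta> \<le> 2 * (w \<bullet> p) - (norm w)\<^sup>2"
      using tangent_bound_at_minimizing_limit[OF K(1) _ s(1) _ w \<open>(p, c) \<in> K\<close>] by blast
    moreover have "b \<le> \<eta>"
      unfolding \<eta>_def using K(2) f_lower by (rule cINF_greatest)
    ultimately show ?thesis by linarith
  qed
  ultimately show ?thesis by blast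
qed

lemma riesz_representation:
  fixes L :: "'a::{real_inner,complete_space} \<Rightarrow> real"
  assumes L: "bounded_linear L"
  shows "\<exists>w. \<forall>y. L y = w \<bullet> y"
proof -
  obtain M where M: "\<And>y. \<bar>L y\<bar> \<le> norm y * M"
    using bounded_linear.bounded[OF L] by auto
  define K where "K = (\<lambda>u. (u, 2 * L u)) ` UNIV"
  have lin: "linear L" using L by (rule bounded_linear.linear)
  then have "linear (\<lambda>u. (u, 2 * L u))"
    by (intro linearI) (simp_all add: linear_add[OF lin] linear_scale[OF lin])
  then have conv: "convex K" unfolding K_def by (rule convex_linear_image) simp
  have below: "c + - M\<^sup>2 \<le> (norm p)\<^sup>2" if "(p, c) \<in> K" for p c
  proof -
    have "c \<le> 2 * (norm p * M)" using that M[of p] by (auto simp: K_def)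
    moreover have "0 \<le> (norm p - M)\<^sup>2" by simp
    ultimately show ?thesis by (simp add: power2_eq_square algebra_simps)
  qed
  have "K \<noteq> {}" by (simp add: K_def)
  then obtain w where w: "\<And>p c. (p, c) \<in> K \<Longrightarrow> c + - M\<^sup>2 \<le> 2 * (w \<bullet> p) - (norm w)\<^sup>2"
    using convex_below_paraboloid_imp_below_tangent[OF conv _ below] by blast
  have "2 * L y = 2 * (w \<bullet> y)" for y
  proof (rule eq_if_scaled_le)
    fix t
    have "2 * L (t *\<^sub>R y) + - M\<^sup>2 \<le> 2 * (w \<bullet> (t *\<^sub>R y)) - (norm w)\<^sup>2"
      by (rule w) (simp add: K_def)
    then show "t * (2 * L y) \<le> t * (2 * (w \<bullet> y)) + (M\<^sup>2 - (norm w)\<^sup>2)"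
      by (simp add: linear_scale[OF lin] algebra_simps)
  qed
  then show ?thesis by auto
qed

lemma orthogonal_projection_closure_span:
  fixes y :: "'a::{real_inner,complete_space}"
  shows "\<exists>v\<in>closure (span S). \<forall>u\<in>span S. (y - v) \<bullet> u = 0"
proof -
  define K where "K = (\<lambda>u. (u, 2 * (y \<bullet> u))) ` span S"
  have "linear (\<lambda>u. (u, 2 * (y \<bullet> u)))"
    by (simp add: linear_iff inner_simps algebra_simps)
  then have conv: "convex K"
    unfolding K_def by (rule convex_linear_image) (rule subspace_imp_convex[OF subspace_span])
  have ne: "K \<noteq> {}" using span_zero by (auto simp: K_def)
  have below: "c + - (norm y)\<^sup>2 \<le> (norm p)\<^sup>2" if "(p, c) \<in> K" for p c
  proof -
    have "0 \<le> (norm (p - y))\<^sup>2" by simp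
    then show ?thesis using that unfolding K_def power2_norm_eq_inner
      by (auto simp: inner_simps inner_commute)
  qed
  obtain v where v: "v \<in> closure (fst ` K)"
    and le: "\<And>p c. (p, c) \<in> K \<Longrightarrow> c + - (norm y)\<^sup>2 \<le> 2 * (v \<bullet> p) - (norm v)\<^sup>2"
    using convex_below_paraboloid_imp_below_tangent[OF conv ne below] by blast
  have "(y - v) \<bullet> u = 0" if u: "u \<in> span S" for u
  proof -
    have "2 * (y \<bullet> u) = 2 * (v \<bullet> u)"
    proof (rule eq_if_scaled_le)
      fix t
      have "2 * (y \<bullet> (t *\<^sub>R u)) + - (norm y)\<^sup>2 \<le> 2 * (v \<bullet> (t *\<^sub>R u)) - (norm v)\<^sup>2"
        using u by (intro le) (auto simp: K_def intro!: image_eqI[where x="t *\<^sub>R u"] span_scale)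
      then show "t * (2 * (y \<bullet> u)) \<le> t * (2 * (v \<bullet> u)) + ((norm y)\<^sup>2 - (norm v)\<^sup>2)"
        by (simp add: algebra_simps)
    qed
    then show ?thesis by (simp add: inner_diff_left)
  qed
  moreover have "fst ` K = span S" unfolding K_def image_image by simp
  ultimately show ?thesis using v by auto
qed

section \<open>Weak convergence\<close>

lemma weak_conv_subseq: "weak_conv x w \<Longrightarrow> strict_mono \<sigma> \<Longrightarrow> weak_conv (\<lambda>n. x (\<sigma> n)) w"
  unfolding weak_conv_def using LIMSEQ_subseq_LIMSEQ by (fastforce simp: o_def)

lemma tendsto_imp_weak_conv: "x \<longlonglongrightarrow> w \<Longrightarrow> weak_conv x w"
  unfolding weak_conv_def by (auto intro: tendsto_intros)

lemma weak_conv_unique: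
  assumes "weak_conv x v" "weak_conv x w"
  shows "v = w"
proof -
  have "v \<bullet> (v - w) = w \<bullet> (v - w)"
    using assms unfolding weak_conv_def by (blast intro: LIMSEQ_unique)
  then have "(v - w) \<bullet> (v - w) = 0" by (simp add: inner_diff_left)
  then show ?thesis by simp
qed

lemma weak_conv_diff:
  "weak_conv x v \<Longrightarrow> weak_conv y w \<Longrightarrow> weak_conv (\<lambda>n. x n - y n) (v - w)"
  unfolding weak_conv_def inner_diff_left by (auto intro: tendsto_intros)

lemma weak_conv_scaleR: "weak_conv x w \<Longrightarrow> weak_conv (\<lambda>n. c *\<^sub>R x n) (c *\<^sub>R w)"
  unfolding weak_conv_def inner_scaleR_left by (auto intro: tendsto_intros)

lemma weak_conv_sum:
  "(\<And>i. i \<in> I \<Longrightarrow> weak_conv (x i) (w i)) \<Longrightarrow> weak_conv (\<lambda>n. \<Sum>i\<in>I. x i n) (\<Sum>i\<in>I. w i)"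
  unfolding weak_conv_def inner_sum_left by (auto intro: tendsto_sum)

lemma convergent_inner_closure:
  fixes x :: "nat \<Rightarrow> 'a::real_inner"
  assumes bdd: "bounded (range x)" and conv: "\<And>s. s \<in> S \<Longrightarrow> convergent (\<lambda>n. x n \<bullet> s)"
    and v: "v \<in> closure S"
  shows "convergent (\<lambda>n. x n \<bullet> v)"
proof -
  obtain M where M: "M > 0" "\<And>n. norm (x n) \<le> M"
    using bdd unfolding bounded_pos by auto
  have "Cauchy (\<lambda>n. x n \<bullet> v)"
  proof (rule metric_CauchyI)
    fix e :: real assume e: "e > 0"
    obtain s where s: "s \<in> S" "dist s v < e / (3 * M)"
      using v e M(1) unfolding closure_approachable by (metis divide_pos_pos zero_less_mult_iff zero_less_numeral)
    have close: "\<bar>x n \<bullet> v - x n \<bullet> s\<bar> < e / 3" for n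
    proof -
      have "\<bar>x n \<bullet> (v - s)\<bar> \<le> M * norm (v - s)"
        using Cauchy_Schwarz_ineq2[of "x n" "v - s"] mult_right_mono[OF M(2)[of n] norm_ge_zero]
        by (rule order_trans)
      also have "\<dots> < M * (e / (3 * M))"
        using mult_strict_left_mono[OF s(2) M(1)] by (simp add: dist_norm norm_minus_commute)
      also have "\<dots> = e / 3" using M(1) by simp
      finally show ?thesis by (simp add: inner_diff_right)
    qed
    obtain N where N: "\<And>m n. N \<le> m \<Longrightarrow> N \<le> n \<Longrightarrow> dist (x m \<bullet> s) (x n \<bullet> s) < e / 3"
      using conv[OF s(1)] e unfolding Cauchy_convergent_iff[symmetric] Cauchy_def
      by (meson divide_pos_pos zero_less_numeral)
    have "dist (x m \<bullet> v) (x n \<bullet> v) < e" if "N \<le> m" "N \<le> n" for m n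
      using N[OF that] close[of m] close[of n] unfolding dist_real_def by linarith
    then show "\<exists>N. \<forall>m\<ge>N. \<forall>n\<ge>N. dist (x m \<bullet> v) (x n \<bullet> v) < e" by blast
  qed
  then show ?thesis by (simp add: Cauchy_convergent_iff)
qed

lemma diagonal_subseq_inner_convergent:
  fixes x :: "nat \<Rightarrow> 'a::real_inner"
  assumes bdd: "bounded (range x)"
  shows "\<exists>\<sigma>. strict_mono \<sigma> \<and> (\<forall>k. convergent (\<lambda>n. x (\<sigma> n) \<bullet> x k))"
proof -
  obtain M where M: "\<And>n. norm (x n) \<le> M"
    using bdd unfolding bounded_iff by auto
  interpret S: subseqs "\<lambda>k s. convergent (\<lambda>n. x (s n) \<bullet> x k)"
  proof
    fix k and s :: "nat \<Rightarrow> nat"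
    have "\<bar>x (s n) \<bullet> x k\<bar> \<le> M * norm (x k)" for n
      using Cauchy_Schwarz_ineq2[of "x (s n)" "x k"] mult_right_mono[OF M norm_ge_zero]
      by (rule order_trans)
    then have "bounded (range (\<lambda>n. x (s n) \<bullet> x k))"
      unfolding bounded_iff by (auto intro!: exI[of _ "M * norm (x k)"])
    then obtain l r where "strict_mono r" "((\<lambda>n. x (s n) \<bullet> x k) \<circ> r) \<longlonglongrightarrow> l"
      using bounded_imp_convergent_subsequence by blast
    then show "\<exists>r'. strict_mono r' \<and> convergent (\<lambda>n. x ((s \<circ> r') n) \<bullet> x k)"
      by (auto simp: convergent_def o_def)
  qed
  have "convergent (\<lambda>n. x (S.diagseq n) \<bullet> x k)" for k
  proof -
    have "convergent (\<lambda>n. x ((S.diagseq \<circ> (+) (Suc k)) n) \<bullet> x k)"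
    proof (rule S.diagseq_holds)
      fix r s n assume "strict_mono (r :: nat \<Rightarrow> nat)" "convergent (\<lambda>m. x (s m) \<bullet> x n)"
      then show "convergent (\<lambda>m. x ((s \<circ> r) m) \<bullet> x n)"
        using convergent_subseq_convergent by (fastforce simp: o_def)
    qed
    then obtain l where "(\<lambda>n. x (S.diagseq (n + Suc k)) \<bullet> x k) \<longlonglongrightarrow> l"
      by (auto simp: convergent_def o_def add.commute)
    then have "(\<lambda>n. x (S.diagseq n) \<bullet> x k) \<longlonglongrightarrow> l" by (rule LIMSEQ_offset)
    then show ?thesis by (auto simp: convergent_def)
  qed
  then show ?thesis using S.subseq_diagseq by blast
qed

lemma convergent_inner_span:
  assumes conv: "\<And>k. convergent (\<lambda>n. y n \<bullet> x k)" and v: "v \<in> span (range x)"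
  shows "convergent (\<lambda>n. y n \<bullet> v)"
  using v
proof (induction rule: span_induct_alt)
  case base
  then show ?case by (simp add: convergent_const)
next
  case (step c a v)
  then obtain k where "a = x k" by auto
  obtain l1 where "(\<lambda>n. y n \<bullet> x k) \<longlonglongrightarrow> l1" using conv by (auto simp: convergent_def)
  moreover obtain l2 where "(\<lambda>n. y n \<bullet> v) \<longlonglongrightarrow> l2" using step by (auto simp: convergent_def)
  ultimately have "(\<lambda>n. c * (y n \<bullet> x k) + y n \<bullet> v) \<longlonglongrightarrow> c * l1 + l2"
    by (intro tendsto_intros)
  then show ?case unfolding \<open>a = x k\<close> by (auto simp: convergent_def inner_add_right)
qed

lemma weak_convergent_if_inner_convergent:
  fixes y :: "nat \<Rightarrow> 'a::{real_inner,complete_space}"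
  assumes bdd: "bounded (range y)" and conv: "\<And>z. convergent (\<lambda>n. y n \<bullet> z)"
  shows "\<exists>w. weak_conv y w"
proof -
  obtain M where M: "\<And>n. norm (y n) \<le> M"
    using bdd unfolding bounded_iff by auto
  define L where "L z = lim (\<lambda>n. y n \<bullet> z)" for z
  have L: "(\<lambda>n. y n \<bullet> z) \<longlonglongrightarrow> L z" for z
    unfolding L_def using conv by (rule convergent_LIMSEQ_iff[THEN iffD1])
  have "bounded_linear L"
  proof (rule bounded_linear_intro)
    show "L (a + b) = L a + L b" for a b
      using L[of "a + b"] tendsto_add[OF L[of a] L[of b]] unfolding inner_add_right
      by (rule LIMSEQ_unique)
    show "L (c *\<^sub>R a) = c *\<^sub>R L a" for c a
    proof -
      have "(\<lambda>n. y n \<bullet> (c *\<^sub>R a)) \<longlonglongrightarrow> c * L a"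
        unfolding inner_scaleR_right by (intro tendsto_mult_left L)
      then show ?thesis using LIMSEQ_unique[OF L[of "c *\<^sub>R a"]] by simp
    qed
    show "norm (L z) \<le> norm z * M" for z
    proof -
      have "\<bar>y n \<bullet> z\<bar> \<le> M * norm z" for n
        using Cauchy_Schwarz_ineq2[of "y n" z] mult_right_mono[OF M norm_ge_zero]
        by (rule order_trans)
      then have "\<bar>L z\<bar> \<le> M * norm z"
        by (intro LIMSEQ_le_const2[OF tendsto_rabs[OF L]]) auto
      then show ?thesis by (simp add: mult.commute)
    qed
  qed
  then obtain w where "\<And>z. L z = w \<bullet> z" using riesz_representation by blast
  then have "weak_conv y w"
    unfolding weak_conv_def using L by simp
  then show ?thesis by blast
qed

lemma bounded_imp_weak_convergent_subseq:
  fixes x :: "nat \<Rightarrow> 'a::{real_inner,complete_space}"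
  assumes bdd: "bounded (range x)"
  shows "\<exists>\<sigma> w. strict_mono \<sigma> \<and> weak_conv (\<lambda>n. x (\<sigma> n)) w"
proof -
  obtain \<sigma> where \<sigma>: "strict_mono \<sigma>" "\<And>k. convergent (\<lambda>n. x (\<sigma> n) \<bullet> x k)"
    using diagonal_subseq_inner_convergent[OF bdd] by blast
  have bdd_\<sigma>: "bounded (range (\<lambda>n. x (\<sigma> n)))"
    using bdd by (rule bounded_subset) auto
  have "convergent (\<lambda>n. x (\<sigma> n) \<bullet> z)" for z
  proof -
    obtain v where v: "v \<in> closure (span (range x))"
      and orth: "\<And>u. u \<in> span (range x) \<Longrightarrow> (z - v) \<bullet> u = 0"
      using orthogonal_projection_closure_span by blast
    have "x (\<sigma> n) \<bullet> z = x (\<sigma> n) \<bullet> v" for n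
      using orth[OF span_base[OF rangeI[of x "\<sigma> n"]]] by (simp add: inner_diff_left inner_commute)
    moreover have "convergent (\<lambda>n. x (\<sigma> n) \<bullet> v)"
      using convergent_inner_closure[OF bdd_\<sigma> convergent_inner_span[OF \<sigma>(2)] v] .
    ultimately show ?thesis by simp
  qed
  then obtain w where "weak_conv (\<lambda>n. x (\<sigma> n)) w"
    using weak_convergent_if_inner_convergent[OF bdd_\<sigma>] by blast
  then show ?thesis using \<sigma>(1) by blast
qed

lemma bounded_imp_weak_convergent_subseq_tuple:
  fixes X :: "nat \<Rightarrow> nat \<Rightarrow> 'a::{real_inner,complete_space}"
  assumes "\<And>i. i < r \<Longrightarrow> bounded (range (\<lambda>n. X n i))"
  shows "\<exists>\<sigma> L. strict_mono \<sigma> \<and> (\<forall>i<r. weak_conv (\<lambda>n. X (\<sigma> n) i) (L i))"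
  using assms
proof (induction r)
  case 0
  show ?case by (auto intro: exI[of _ id] strict_monoI)
next
  case (Suc r)
  then obtain \<sigma> L where \<sigma>: "strict_mono \<sigma>" "\<forall>i<r. weak_conv (\<lambda>n. X (\<sigma> n) i) (L i)"
    by (metis less_SucI)
  have "bounded (range (\<lambda>n. X (\<sigma> n) r))"
    using Suc.prems[of r] by (rule bounded_subset) auto
  then obtain \<tau> w where \<tau>: "strict_mono \<tau>" "weak_conv (\<lambda>n. X (\<sigma> (\<tau> n)) r) w"
    using bounded_imp_weak_convergent_subseq by blast
  have "\<forall>i<Suc r. weak_conv (\<lambda>n. X ((\<sigma> \<circ> \<tau>) n) i) ((L(r := w)) i)"
    using \<sigma>(2) \<tau>(2) weak_conv_subseq[OF _ \<tau>(1)] by (auto simp: less_Suc_eq)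
  then show ?case using strict_mono_o[OF \<sigma>(1) \<tau>(1)] by blast
qed

lemma LIMSEQ_if_subseq_subseq:
  fixes f :: "nat \<Rightarrow> 'a::metric_space"
  assumes "\<And>\<sigma> :: nat \<Rightarrow> nat. strict_mono \<sigma> \<Longrightarrow>
    \<exists>\<tau> :: nat \<Rightarrow> nat. strict_mono \<tau> \<and> (\<lambda>n. f (\<sigma> (\<tau> n))) \<longlonglongrightarrow> l"
  shows "f \<longlonglongrightarrow> l"
proof (rule ccontr)
  assume "\<not> f \<longlonglongrightarrow> l"
  then obtain e where e: "e > 0" and freq: "\<And>N. \<exists>n\<ge>N. e \<le> dist (f n) l"
    unfolding LIMSEQ_def by (auto simp: not_less)
  define S where "S = {n. e \<le> dist (f n) l}"
  have S: "infinite S"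
    unfolding S_def infinite_nat_iff_unbounded_le using freq by blast
  have "strict_mono (enumerate S)"
    by (rule strict_monoI) (rule enumerate_mono[OF _ S])
  from assms[OF this] obtain \<tau> where "(\<lambda>n. f (enumerate S (\<tau> n))) \<longlonglongrightarrow> l"
    by blast
  then obtain N where "dist (f (enumerate S (\<tau> N))) l < e"
    using e unfolding LIMSEQ_def by blast
  moreover have "enumerate S (\<tau> N) \<in> S" by (rule enumerate_in_set[OF S])
  ultimately show False by (simp add: S_def)
qed

section \<open>Tuples\<close>

definition mean :: "nat \<Rightarrow> (nat \<Rightarrow> 'a::real_vector) \<Rightarrow> 'a" where
  "mean r v = (1 / real r) *\<^sub>R (\<Sum>i<r. v i)"

definition sqdist :: "nat \<Rightarrow> (nat \<Rightarrow> 'a::real_normed_vector) \<Rightarrow> (nat \<Rightarrow> 'a) \<Rightarrow> real" where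
  "sqdist r u v = (\<Sum>i<r. (norm (u i - v i))\<^sup>2)"

lemma mean_diff: "mean r (\<lambda>i. u i - v i) = mean r u - mean r v"
  unfolding mean_def by (simp add: sum_subtractf scaleR_diff_right)

lemma mean_cong: "(\<And>i. i < r \<Longrightarrow> u i = v i) \<Longrightarrow> mean r u = mean r v"
  unfolding mean_def by (metis lessThan_iff sum.cong)

lemma norm_mean_le:
  assumes "r > 0" "\<And>i. i < r \<Longrightarrow> norm (v i) \<le> B"
  shows "norm (mean r v) \<le> B"
proof -
  have "norm (mean r v) \<le> (1 / real r) * (\<Sum>i<r. norm (v i))"
    unfolding mean_def using norm_sum[of v "{..<r}"] by (simp add: divide_right_mono)
  also have "\<dots> \<le> (1 / real r) * (\<Sum>i<r. B)"
    using assms by (intro mult_left_mono sum_mono) auto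
  also have "\<dots> = B" using assms(1) by simp
  finally show ?thesis .
qed

lemma norm_sq_le_sqdist: "i < r \<Longrightarrow> (norm (u i - v i))\<^sup>2 \<le> sqdist r u v"
  unfolding sqdist_def by (rule member_le_sum) auto

lemma sqdist_nonneg: "0 \<le> sqdist r u v"
  unfolding sqdist_def by (simp add: sum_nonneg)

lemma sum_norm_sq_scaled_mean_diff:
  fixes d :: "nat \<Rightarrow> 'a::real_inner"
  assumes r: "r > 0"
  shows "(\<Sum>i<r. (norm (c *\<^sub>R mean r d - d i))\<^sup>2)
    = (\<Sum>i<r. (norm (d i))\<^sup>2) - c * (2 - c) * real r * (norm (mean r d))\<^sup>2"
proof -
  have sum_d: "(\<Sum>i<r. d i) = real r *\<^sub>R mean r d" using r by (simp add: mean_def)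
  have "(\<Sum>i<r. (norm (c *\<^sub>R mean r d - d i))\<^sup>2)
      = (\<Sum>i<r. c\<^sup>2 * (norm (mean r d))\<^sup>2 - 2 * c * (mean r d \<bullet> d i) + (norm (d i))\<^sup>2)"
    unfolding power2_norm_eq_inner
    by (intro sum.cong) (simp_all add: inner_simps inner_commute power2_eq_square algebra_simps)
  also have "\<dots> = real r * c\<^sup>2 * (norm (mean r d))\<^sup>2 - 2 * c * (mean r d \<bullet> (\<Sum>i<r. d i))
      + (\<Sum>i<r. (norm (d i))\<^sup>2)"
    by (simp add: sum.distrib sum_subtractf sum_distrib_left inner_sum_right)
  also have "\<dots> = (\<Sum>i<r. (norm (d i))\<^sup>2) - c * (2 - c) * real r * (norm (mean r d))\<^sup>2"
    unfolding sum_d by (simp add: dot_square_norm power2_eq_square algebra_simps)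
  finally show ?thesis .
qed

lemma weak_cluster_points_eq:
  fixes X :: "nat \<Rightarrow> nat \<Rightarrow> 'a::real_inner"
  assumes "convergent (\<lambda>n. sqdist r (X n) L1)" "convergent (\<lambda>n. sqdist r (X n) L2)"
    and \<sigma>1: "strict_mono \<sigma>1" "\<And>i. i < r \<Longrightarrow> weak_conv (\<lambda>n. X (\<sigma>1 n) i) (L1 i)"
    and \<sigma>2: "strict_mono \<sigma>2" "\<And>i. i < r \<Longrightarrow> weak_conv (\<lambda>n. X (\<sigma>2 n) i) (L2 i)"
  shows "\<forall>i<r. L1 i = L2 i"
proof -
  define \<theta> where "\<theta> n = (\<Sum>i<r. X n i \<bullet> (L1 i - L2 i))" for n
  define K where "K = (\<Sum>i<r. (norm (L2 i))\<^sup>2 - (norm (L1 i))\<^sup>2)"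
  have \<theta>: "\<theta> n = (sqdist r (X n) L2 - sqdist r (X n) L1 - K) / 2" for n
  proof -
    have "sqdist r (X n) L2 - sqdist r (X n) L1
        = (\<Sum>i<r. 2 * (X n i \<bullet> (L1 i - L2 i)) + ((norm (L2 i))\<^sup>2 - (norm (L1 i))\<^sup>2))"
      unfolding sqdist_def sum_subtractf[symmetric]
      by (rule sum.cong) (simp_all add: power2_norm_eq_inner inner_simps inner_commute)
    also have "\<dots> = 2 * \<theta> n + K" unfolding \<theta>_def K_def by (simp add: sum.distrib sum_distrib_left)
    finally show ?thesis by simp
  qed
  obtain l1 l2 where "(\<lambda>n. sqdist r (X n) L1) \<longlonglongrightarrow> l1" "(\<lambda>n. sqdist r (X n) L2) \<longlonglongrightarrow> l2"
    using assms(1,2) by (auto simp: convergent_def)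
  then have l: "\<theta> \<longlonglongrightarrow> (l2 - l1 - K) / 2"
    unfolding \<theta>[abs_def] by (intro tendsto_divide tendsto_diff tendsto_const) simp_all
  have "(\<lambda>n. \<theta> (\<sigma>1 n)) \<longlonglongrightarrow> (\<Sum>i<r. L1 i \<bullet> (L1 i - L2 i))"
    unfolding \<theta>_def using \<sigma>1(2) unfolding weak_conv_def by (intro tendsto_sum) auto
  moreover have "(\<lambda>n. \<theta> (\<sigma>1 n)) \<longlonglongrightarrow> (l2 - l1 - K) / 2"
    using LIMSEQ_subseq_LIMSEQ[OF l \<sigma>1(1)] by (simp add: o_def)
  ultimately have 1: "(\<Sum>i<r. L1 i \<bullet> (L1 i - L2 i)) = (l2 - l1 - K) / 2"
    by (rule LIMSEQ_unique)
  have "(\<lambda>n. \<theta> (\<sigma>2 n)) \<longlonglongrightarrow> (\<Sum>i<r. L2 i \<bullet> (L1 i - L2 i))"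
    unfolding \<theta>_def using \<sigma>2(2) unfolding weak_conv_def by (intro tendsto_sum) auto
  moreover have "(\<lambda>n. \<theta> (\<sigma>2 n)) \<longlonglongrightarrow> (l2 - l1 - K) / 2"
    using LIMSEQ_subseq_LIMSEQ[OF l \<sigma>2(1)] by (simp add: o_def)
  ultimately have 2: "(\<Sum>i<r. L2 i \<bullet> (L1 i - L2 i)) = (l2 - l1 - K) / 2"
    by (rule LIMSEQ_unique)
  have "(\<Sum>i<r. (L1 i - L2 i) \<bullet> (L1 i - L2 i))
      = (\<Sum>i<r. L1 i \<bullet> (L1 i - L2 i)) - (\<Sum>i<r. L2 i \<bullet> (L1 i - L2 i))"
    by (simp only: inner_diff_left sum_subtractf)
  also have "\<dots> = 0" unfolding 1 2 by simp
  finally show ?thesis by (simp add: sum_nonneg_eq_0_iff)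
qed

lemma opial_tuple:
  fixes X :: "nat \<Rightarrow> nat \<Rightarrow> 'a::{real_inner,complete_space}"
  assumes bdd: "\<And>i. i < r \<Longrightarrow> bounded (range (\<lambda>n. X n i))"
    and fejer: "\<And>v. F v \<Longrightarrow> convergent (\<lambda>n. sqdist r (X n) v)"
    and cluster: "\<And>\<sigma> L. strict_mono \<sigma> \<Longrightarrow> (\<And>i. i < r \<Longrightarrow> weak_conv (\<lambda>n. X (\<sigma> n) i) (L i))
      \<Longrightarrow> F L"
  shows "\<exists>L. F L \<and> (\<forall>i<r. weak_conv (\<lambda>n. X n i) (L i))"
proof -
  obtain \<sigma> L where \<sigma>: "strict_mono \<sigma>" "\<And>i. i < r \<Longrightarrow> weak_conv (\<lambda>n. X (\<sigma> n) i) (L i)"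
    using bounded_imp_weak_convergent_subseq_tuple[of r X] bdd by blast
  have FL: "F L" using cluster[OF \<sigma>] .
  have "(\<lambda>n. X n i \<bullet> z) \<longlonglongrightarrow> L i \<bullet> z" if i: "i < r" for i z
  proof (rule LIMSEQ_if_subseq_subseq)
    fix \<rho> :: "nat \<Rightarrow> nat" assume \<rho>: "strict_mono \<rho>"
    have "bounded (range (\<lambda>n. X (\<rho> n) j))" if "j < r" for j
      using bdd[OF that] by (rule bounded_subset) auto
    then obtain \<tau> L' where \<tau>: "strict_mono \<tau>"
      and w': "\<And>j. j < r \<Longrightarrow> weak_conv (\<lambda>n. X ((\<rho> \<circ> \<tau>) n) j) (L' j)"
      using bounded_imp_weak_convergent_subseq_tuple[of r "\<lambda>n. X (\<rho> n)"] by auto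
    have \<rho>\<tau>: "strict_mono (\<rho> \<circ> \<tau>)" using \<rho> \<tau> by (rule strict_mono_o)
    have "L' i = L i"
      using weak_cluster_points_eq[OF fejer[OF cluster[OF \<rho>\<tau> w']] fejer[OF FL] \<rho>\<tau> w' \<sigma>] i
      by blast
    then show "\<exists>\<tau>. strict_mono \<tau> \<and> (\<lambda>n. X (\<rho> (\<tau> n)) i \<bullet> z) \<longlonglongrightarrow> L i \<bullet> z"
      using \<tau> w'[OF i] unfolding weak_conv_def by auto
  qed
  then show ?thesis using FL unfolding weak_conv_def by blast
qed

section \<open>Monotone operators and resolvents\<close>

lemma monotone_opD: "monotone_op T \<Longrightarrow> u \<in> T x \<Longrightarrow> v \<in> T y \<Longrightarrow> 0 \<le> (x - y) \<bullet> (u - v)"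
  unfolding monotone_op_def by blast

lemma maximal_monotone_memI:
  assumes A: "maximal_monotone A" and rel: "\<And>y v. v \<in> A y \<Longrightarrow> 0 \<le> (x - y) \<bullet> (u - v)"
  shows "u \<in> A x"
proof -
  define S where "S z = (if z = x then insert u (A z) else A z)" for z
  have mono: "monotone_op A" using A by (simp add: maximal_monotone_def)
  have "monotone_op S"
    unfolding monotone_op_def
  proof (intro allI impI)
    fix a b c d assume "c \<in> S a" "d \<in> S b"
    then consider "c \<in> A a" "d \<in> A b" | "a = x" "c = u" "d \<in> A b" | "c \<in> A a" "b = x" "d = u"
      | "a = x" "c = u" "b = x" "d = u"
      by (auto simp: S_def split: if_splits)
    then show "0 \<le> (a - b) \<bullet> (c - d)"
    proof cases
      case 1
      then show ?thesis using monotone_opD[OF mono] by blast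
    next
      case 2
      then show ?thesis using rel by simp
    next
      case 3
      then show ?thesis using rel[of c a] by (simp add: inner_diff_left inner_diff_right algebra_simps)
    qed simp
  qed
  moreover have "\<forall>z. A z \<subseteq> S z" by (auto simp: S_def)
  ultimately have "S = A" using A unfolding maximal_monotone_def by blast
  then show ?thesis by (metis S_def insertI1)
qed

lemma monotone_sum_op:
  assumes "\<And>i. i < r \<Longrightarrow> monotone_op (A i)"
  shows "monotone_op (sum_op r A)"
  unfolding monotone_op_def
proof (intro allI impI)
  fix x y a b assume "a \<in> sum_op r A x" "b \<in> sum_op r A y"
  then obtain u v where u: "a = (\<Sum>i<r. u i)" "\<forall>i<r. u i \<in> A i x"
    and v: "b = (\<Sum>i<r. v i)" "\<forall>i<r. v i \<in> A i y"
    by (auto simp: sum_op_def)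
  have "(x - y) \<bullet> (a - b) = (\<Sum>i<r. (x - y) \<bullet> (u i - v i))"
    by (simp add: u v inner_sum_right inner_diff_right sum_subtractf)
  also have "\<dots> \<ge> 0"
    using assms u(2) v(2) by (intro sum_nonneg) (auto intro: monotone_opD)
  finally show "0 \<le> (x - y) \<bullet> (a - b)" .
qed

lemma monotone_scale_op: "monotone_op T \<Longrightarrow> 0 \<le> c \<Longrightarrow> monotone_op (scale_op c T)"
  unfolding monotone_op_def scale_op_def
  by (auto simp: scaleR_diff_right[symmetric] inner_scaleR_right)

lemma monotone_perturb_op:
  assumes T: "monotone_op T"
  shows "monotone_op (perturb_op w T)"
  unfolding monotone_op_def perturb_op_def
proof (intro allI impI)
  fix x y u v assume "u \<in> T (x - w)" "v \<in> T (y - w)"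
  then have "0 \<le> ((x - w) - (y - w)) \<bullet> (u - v)" by (rule monotone_opD[OF T])
  then show "0 \<le> (x - y) \<bullet> (u - v)" by simp
qed

lemma maximal_monotone_demiclosed:
  assumes A: "maximal_monotone A"
    and u: "\<And>n. u n \<in> A (s n)" and s: "s \<longlonglongrightarrow> s0" and w: "weak_conv u u0"
    and bdd: "bounded (range u)"
  shows "u0 \<in> A s0"
proof (rule maximal_monotone_memI[OF A])
  fix y v assume v: "v \<in> A y"
  obtain B where B: "\<And>n. norm (u n - v) \<le> B"
    using bdd bounded_minus_comp[of u UNIV "\<lambda>_. v"] unfolding bounded_iff by auto
  have "(\<lambda>n. (u n - v) \<bullet> (s n - s0)) \<longlonglongrightarrow> 0"
  proof (rule Lim_null_comparison)
    have "norm ((u n - v) \<bullet> (s n - s0)) \<le> B * norm (s n - s0)" for n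
    proof -
      have "norm ((u n - v) \<bullet> (s n - s0)) \<le> norm (u n - v) * norm (s n - s0)"
        by (simp add: Cauchy_Schwarz_ineq2)
      also have "\<dots> \<le> B * norm (s n - s0)" by (rule mult_right_mono[OF B norm_ge_zero])
      finally show ?thesis .
    qed
    then show "\<forall>\<^sub>F n in sequentially. norm ((u n - v) \<bullet> (s n - s0)) \<le> B * norm (s n - s0)"
      by simp
    have "(\<lambda>n. norm (s n - s0)) \<longlonglongrightarrow> 0" using s by (intro tendsto_norm_zero LIM_zero)
    then show "(\<lambda>n. B * norm (s n - s0)) \<longlonglongrightarrow> 0" by (rule tendsto_mult_right_zero)
  qed
  moreover have "(\<lambda>n. (u n - v) \<bullet> (s0 - y)) \<longlonglongrightarrow> (u0 - v) \<bullet> (s0 - y)"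
    using weak_conv_diff[OF w tendsto_imp_weak_conv[OF tendsto_const]] unfolding weak_conv_def ..
  ultimately have "(\<lambda>n. (u n - v) \<bullet> (s n - s0) + (u n - v) \<bullet> (s0 - y)) \<longlonglongrightarrow> 0 + (u0 - v) \<bullet> (s0 - y)"
    by (rule tendsto_add)
  then have "(\<lambda>n. (u n - v) \<bullet> (s n - y)) \<longlonglongrightarrow> (u0 - v) \<bullet> (s0 - y)"
    by (simp add: inner_add_right[symmetric])
  moreover have "0 \<le> (u n - v) \<bullet> (s n - y)" for n
    using monotone_opD[OF _ u v] A by (simp add: maximal_monotone_def inner_commute)
  ultimately have "0 \<le> (u0 - v) \<bullet> (s0 - y)"
    by (intro LIMSEQ_le_const) auto
  then show "0 \<le> (s0 - y) \<bullet> (u0 - v)" by (simp only: inner_commute)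
qed

lemma le_on_convex_hull_linear:
  fixes \<psi> :: "'a::real_vector \<Rightarrow> real"
  assumes \<psi>: "linear \<psi>" and G: "\<And>g. g \<in> G \<Longrightarrow> c \<le> \<psi> g" and d: "d \<in> convex hull G"
  shows "c \<le> \<psi> d"
proof -
  have "convex (\<psi> -` {c..})"
    using \<psi> by (rule convex_linear_vimage) (simp add: convex_real_interval)
  then have "convex hull G \<subseteq> \<psi> -` {c..}"
    using G by (intro hull_minimal) auto
  then show ?thesis using d by auto
qed

lemma inner_le_on_convex_hull_monotone_graph:
  fixes A :: "'a::real_inner \<Rightarrow> 'a set"
  assumes A: "monotone_op A" and d: "d \<in> convex hull {(y, v, y \<bullet> v) | y v. v \<in> A y}"
  shows "fst d \<bullet> fst (snd d) \<le> snd (snd d)"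
proof -
  define G where "G = {(y, v, y \<bullet> v) | y v. v \<in> A y}"
  have lin: "linear (\<lambda>e::'a \<times> 'a \<times> real. snd (snd e) - a \<bullet> fst (snd e) - fst e \<bullet> b)" for a b
    by (simp add: linear_iff inner_simps algebra_simps)
  have graph: "- (y \<bullet> v) \<le> snd (snd e) - y \<bullet> fst (snd e) - fst e \<bullet> v"
    if yv: "v \<in> A y" and e: "e \<in> convex hull G" for y v e
  proof (rule le_on_convex_hull_linear[OF lin _ e])
    fix g assume "g \<in> G"
    then obtain y' v' where g: "g = (y', v', y' \<bullet> v')" "v' \<in> A y'" by (auto simp: G_def)
    have "0 \<le> (y - y') \<bullet> (v - v')" using monotone_opD[OF A yv g(2)] .
    then show "- (y \<bullet> v) \<le> snd (snd g) - y \<bullet> fst (snd g) - fst g \<bullet> v"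
      using g(1) by (simp add: inner_simps)
  qed
  have "- snd (snd d) \<le> snd (snd d) - fst d \<bullet> fst (snd d) - fst d \<bullet> fst (snd d)"
  proof (rule le_on_convex_hull_linear[OF lin _ d[folded G_def]])
    fix g assume "g \<in> G"
    then obtain y v where g: "g = (y, v, y \<bullet> v)" "v \<in> A y" by (auto simp: G_def)
    show "- snd (snd d) \<le> snd (snd g) - fst d \<bullet> fst (snd g) - fst g \<bullet> fst (snd d)"
      using graph[OF g(2) d[folded G_def]] g(1) by (simp add: inner_commute)
  qed
  then show ?thesis by simp
qed

lemma monotone_graph_hull_below_paraboloid:
  fixes A :: "'a::real_inner \<Rightarrow> 'a set"
  assumes A: "monotone_op A" and d: "(y, v, s) \<in> convex hull {(y, v, y \<bullet> v) | y v. v \<in> A y}"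
  shows "y \<bullet> z - s \<le> (norm ((1/2) *\<^sub>R (z - v + y)))\<^sup>2"
proof -
  have "y \<bullet> v \<le> s" using inner_le_on_convex_hull_monotone_graph[OF A d] by simp
  moreover have "(norm ((1/2) *\<^sub>R (z - v + y)))\<^sup>2 - y \<bullet> (z - v) = (norm ((1/2) *\<^sub>R (z - v - y)))\<^sup>2"
    unfolding power2_norm_eq_inner by (simp add: inner_simps inner_commute algebra_simps)
  ultimately show ?thesis
    using zero_le_power2[of "norm ((1/2) *\<^sub>R (z - v - y))"] unfolding inner_diff_right by linarith
qed

text \<open>Lifting the graph to the points \<open>(y, v, y \<bullet> v)\<close> makes the constraint \<open>y \<bullet> v \<le> s\<close>
  survive convex combinations, so the affine image \<open>((z - v + y) / 2, y \<bullet> z - s)\<close> of the convex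
  hull lies below the paraboloid; its tangency point is the required \<open>w\<close>.\<close>

lemma monotone_related_point_exists:
  fixes A :: "'a::{real_inner,complete_space} \<Rightarrow> 'a set"
  assumes A: "monotone_op A"
  shows "\<exists>w. \<forall>y v. v \<in> A y \<longrightarrow> 0 \<le> (w - y) \<bullet> (z - w - v)"
proof (cases "\<exists>y. A y \<noteq> {}")
  case False
  then show ?thesis by auto
next
  case True
  define D where "D = convex hull {(y, v, y \<bullet> v) | y v. v \<in> A y}"
  define f where "f d = ((1/2) *\<^sub>R (z - fst (snd d) + fst d), fst d \<bullet> z - snd (snd d))"
    for d :: "'a \<times> 'a \<times> real"
  define h where "h d = ((1/2) *\<^sub>R (fst d - fst (snd d)), fst d \<bullet> z - snd (snd d))"
    for d :: "'a \<times> 'a \<times> real"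
  have "linear h" by (simp add: linear_iff h_def inner_simps algebra_simps)
  moreover have "convex D" unfolding D_def by (rule convex_convex_hull)
  ultimately have "convex ((+) ((1/2) *\<^sub>R z, 0) ` (h ` D))"
    by (intro convex_translation convex_linear_image)
  moreover have "(+) ((1/2) *\<^sub>R z, 0) ` (h ` D) = f ` D"
    unfolding image_image by (rule image_cong) (simp_all add: f_def h_def algebra_simps)
  ultimately have conv: "convex (f ` D)" by simp
  have ne: "f ` D \<noteq> {}" using True by (auto simp: D_def intro: hull_inc)
  have below: "c + 0 \<le> (norm p)\<^sup>2" if pc: "(p, c) \<in> f ` D" for p c
  proof -
    obtain e where e: "e \<in> D" "(p, c) = f e" using pc by (rule imageE)
    obtain y v s where "e = (y, v, s)" by (rule prod_cases3)
    with e show ?thesis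
      using monotone_graph_hull_below_paraboloid[OF A, of y v s z] by (simp add: D_def f_def)
  qed
  obtain w where w: "\<And>p c. (p, c) \<in> f ` D \<Longrightarrow> c + 0 \<le> 2 * (w \<bullet> p) - (norm w)\<^sup>2"
    using convex_below_paraboloid_imp_below_tangent[OF conv ne below] by blast
  have "0 \<le> (w - y) \<bullet> (z - w - v)" if "v \<in> A y" for y v
  proof -
    have "(y, v, y \<bullet> v) \<in> D" using that by (auto simp: D_def intro: hull_inc)
    then have "((1/2) *\<^sub>R (z - v + y), y \<bullet> z - y \<bullet> v) \<in> f ` D"
      by (intro image_eqI[where x="(y, v, y \<bullet> v)"]) (simp_all add: f_def)
    then have "y \<bullet> z - y \<bullet> v + 0 \<le> 2 * (w \<bullet> ((1/2) *\<^sub>R (z - v + y))) - (norm w)\<^sup>2"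
      by (rule w)
    then show ?thesis
      by (simp add: power2_norm_eq_inner inner_simps inner_commute algebra_simps)
  qed
  then show ?thesis by blast
qed

lemma minty_surjectivity:
  fixes A :: "'a::{real_inner,complete_space} \<Rightarrow> 'a set"
  assumes A: "maximal_monotone A" and \<gamma>: "\<gamma> > 0"
  shows "\<exists>w u. u \<in> A w \<and> z = w + \<gamma> *\<^sub>R u"
proof -
  have "monotone_op (scale_op \<gamma> A)"
    using A \<gamma> by (intro monotone_scale_op) (auto simp: maximal_monotone_def)
  then obtain w where w: "\<And>y v. v \<in> scale_op \<gamma> A y \<Longrightarrow> 0 \<le> (w - y) \<bullet> (z - w - v)"
    using monotone_related_point_exists by blast
  define u where "u = (1 / \<gamma>) *\<^sub>R (z - w)"
  have "u \<in> A w"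
  proof (rule maximal_monotone_memI[OF A])
    fix y v assume "v \<in> A y"
    then have "\<gamma> *\<^sub>R v \<in> scale_op \<gamma> A y" unfolding scale_op_def by (rule imageI)
    then have "0 \<le> (w - y) \<bullet> (z - w - \<gamma> *\<^sub>R v)" by (rule w)
    moreover have "z - w - \<gamma> *\<^sub>R v = \<gamma> *\<^sub>R (u - v)" using \<gamma> by (simp add: u_def algebra_simps)
    ultimately show "0 \<le> (w - y) \<bullet> (u - v)" using \<gamma> by (simp add: zero_le_mult_iff)
  qed
  moreover have "z = w + \<gamma> *\<^sub>R u" using \<gamma> by (simp add: u_def)
  ultimately show ?thesis by blast
qed

lemma resolvent_eqI:
  assumes T: "monotone_op T" and w: "x - w \<in> T w"
  shows "resolvent T x = w"
  unfolding resolvent_def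
proof (rule the_equality)
  show "x - w \<in> T w" by (rule w)
  fix w' assume "x - w' \<in> T w'"
  then have "0 \<le> (w' - w) \<bullet> ((x - w') - (x - w))" using w by (rule monotone_opD[OF T])
  then have "(w' - w) \<bullet> (w' - w) \<le> 0" by (simp add: inner_diff_right inner_commute)
  then have "(w' - w) \<bullet> (w' - w) = 0" using inner_ge_zero[of "w' - w"] by linarith
  then show "w' = w" by simp
qed

lemma scale_perturb_op_iff:
  "v \<in> scale_op \<gamma> (perturb_op w T) x \<longleftrightarrow> (\<exists>u\<in>T (x - w). v = \<gamma> *\<^sub>R u)"
  unfolding scale_op_def perturb_op_def by auto

lemma resolvent_scale_perturb_mem:
  fixes T :: "'a::{real_inner,complete_space} \<Rightarrow> 'a set" and w :: 'a and \<gamma> :: real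
  assumes T: "maximal_monotone T" and \<gamma>: "\<gamma> > 0"
  defines "S \<equiv> scale_op \<gamma> (perturb_op w T)"
  shows "x - resolvent S x \<in> S (resolvent S x)"
proof -
  obtain y u where "u \<in> T y" "x - w = y + \<gamma> *\<^sub>R u" using minty_surjectivity[OF T \<gamma>] by blast
  then have mem: "x - (y + w) \<in> S (y + w)"
    unfolding S_def scale_perturb_op_iff by (intro bexI[of _ u]) (simp_all add: algebra_simps)
  have "monotone_op S"
    using T \<gamma> unfolding S_def maximal_monotone_def
    by (intro monotone_scale_op monotone_perturb_op) auto
  then have "resolvent S x = y + w" using mem by (rule resolvent_eqI)
  then show ?thesis using mem by simp
qed

lemma resolvent_firmly_nonexpansive:
  assumes T: "monotone_op T"
    and a: "a - resolvent T a \<in> T (resolvent T a)" and b: "b - resolvent T b \<in> T (resolvent T b)"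
  shows "(norm (resolvent T a - resolvent T b))\<^sup>2 \<le> (resolvent T a - resolvent T b) \<bullet> (a - b)"
proof -
  have "(a - resolvent T a) - (b - resolvent T b) = (a - b) - (resolvent T a - resolvent T b)"
    by simp
  then show ?thesis
    using monotone_opD[OF T a b] by (simp add: power2_norm_eq_inner inner_diff_right)
qed

lemma norm_sq_scaled_diff_le:
  fixes u d :: "'a::real_inner"
  assumes ud: "(norm u)\<^sup>2 \<le> u \<bullet> d" and \<beta>: "0 \<le> \<beta>" "\<beta> \<le> 1"
  shows "(norm ((2 * \<beta>) *\<^sub>R u - d))\<^sup>2 \<le> (norm d)\<^sup>2"
proof -
  have "(norm ((2 * \<beta>) *\<^sub>R u - d))\<^sup>2 = 4 * \<beta>\<^sup>2 * (norm u)\<^sup>2 - 4 * \<beta> * (u \<bullet> d) + (norm d)\<^sup>2"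
    unfolding power2_norm_eq_inner
    by (simp add: inner_simps inner_commute power2_eq_square algebra_simps)
  also have "\<dots> \<le> (norm d)\<^sup>2 - 4 * \<beta> * (1 - \<beta>) * (norm u)\<^sup>2"
    using mult_left_mono[OF ud, of "4 * \<beta>"] \<beta>(1) by (simp add: power2_eq_square algebra_simps)
  also have "\<dots> \<le> (norm d)\<^sup>2" using \<beta> by simp
  finally show ?thesis .
qed

section \<open>Real sequences\<close>

lemma frequently_lt_if_weighted_summable:
  fixes \<mu> g :: "nat \<Rightarrow> real"
  assumes \<mu>: "\<And>n. 0 \<le> \<mu> n" and S: "summable (\<lambda>n. \<mu> n * g n)" and NS: "\<not> summable \<mu>"
    and e: "e > 0"
  shows "\<exists>n\<ge>N. g n < e"
proof (rule ccontr)
  assume "\<not> (\<exists>n\<ge>N. g n < e)"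
  then have "norm (\<mu> n) \<le> \<mu> n * g n / e" if "N \<le> n" for n
    using that \<mu>[of n] e mult_left_mono[of e "g n" "\<mu> n"] by (auto simp: field_simps not_less)
  then have "summable \<mu>"
    by (rule summable_comparison_test'[OF summable_divide[OF S]])
  then show False using NS by contradiction
qed

lemma decseq_tendsto_zero_if_weighted_summable:
  fixes \<mu> D :: "nat \<Rightarrow> real"
  assumes D: "decseq D" "\<And>n. 0 \<le> D n" and \<mu>: "\<And>n. 0 \<le> \<mu> n"
    and S: "summable (\<lambda>n. \<mu> n * D n)" and NS: "\<not> summable \<mu>"
  shows "D \<longlonglongrightarrow> 0"
proof (rule LIMSEQ_I)
  fix e :: real assume "0 < e"
  then obtain N where N: "D N < e"
    using frequently_lt_if_weighted_summable[OF \<mu> S NS] by blast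
  have "norm (D n - 0) < e" if "N \<le> n" for n
    using decseqD[OF D(1) that] D(2)[of n] N by simp
  then show "\<exists>N. \<forall>n\<ge>N. norm (D n - 0) < e" by blast
qed

lemma diff_le_sum_if_decrements_le:
  fixes b \<mu> :: "nat \<Rightarrow> real"
  assumes "\<And>n. b n - b (Suc n) \<le> C * \<mu> n" "m \<le> n"
  shows "b m - b n \<le> C * (\<Sum>k=m..<n. \<mu> k)"
proof -
  have "b n - b m = (\<Sum>k=m..<n. b (Suc k) - b k)"
    using sum_Suc_diff'[OF assms(2), of b] by simp
  then have "b m - b n = (\<Sum>k=m..<n. b k - b (Suc k))"
    unfolding sum_subtractf by linarith
  also have "\<dots> \<le> C * (\<Sum>k=m..<n. \<mu> k)"
    unfolding sum_distrib_left by (rule sum_mono) (rule assms(1))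
  finally show ?thesis .
qed

text \<open>If \<open>b\<close> stayed above \<open>e\<close> infinitely often, then, since it also drops below \<open>e/2\<close>
  infinitely often and its increments are controlled by \<open>\<mu>\<close>, each excursion from \<open>e\<close> down to
  \<open>e/2\<close> would carry a \<open>\<mu>\<close>-mass of at least \<open>e/(2C)\<close>, contradicting the Cauchy criterion for
  \<open>\<Sum> \<mu> b\<^sup>2\<close>.\<close>

lemma tendsto_zero_if_weighted_summable_sq:
  fixes b \<mu> :: "nat \<Rightarrow> real"
  assumes b: "\<And>n. 0 \<le> b n" and \<mu>: "\<And>n. 0 \<le> \<mu> n"
    and step: "\<And>n. \<bar>b (Suc n) - b n\<bar> \<le> C * \<mu> n"
    and S: "summable (\<lambda>n. \<mu> n * (b n)\<^sup>2)" and NS: "\<not> summable \<mu>"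
  shows "b \<longlonglongrightarrow> 0"
proof (rule LIMSEQ_I, rule ccontr)
  fix e :: real assume e: "0 < e" and not_eventually: "\<not> (\<exists>N. \<forall>n\<ge>N. norm (b n - 0) < e)"
  have freq: "\<exists>n\<ge>N. e \<le> b n" for N
  proof (rule ccontr)
    assume "\<not> (\<exists>n\<ge>N. e \<le> b n)"
    then have "\<forall>n\<ge>N. b n < e" by (meson not_le)
    then have "\<forall>n\<ge>N. norm (b n - 0) < e" using b by simp
    then show False using not_eventually by blast
  qed
  define C' where "C' = \<bar>C\<bar> + 1"
  have C': "C' > 0" by (simp add: C'_def)
  have step': "b n - b (Suc n) \<le> C' * \<mu> n" for n
  proof -
    have "C * \<mu> n \<le> C' * \<mu> n"
      using \<mu>[of n] abs_ge_self[of C] by (intro mult_right_mono) (simp_all add: C'_def)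
    then show ?thesis using step[of n] unfolding abs_le_iff by linarith
  qed
  define \<delta> where "\<delta> = (e/2)\<^sup>2 * (e / (2 * C'))"
  have "\<delta> > 0" using e C' by (simp add: \<delta>_def)
  then obtain N where N: "\<And>m n. N \<le> m \<Longrightarrow> norm (\<Sum>k=m..<n. \<mu> k * (b k)\<^sup>2) < \<delta>"
    using S unfolding summable_Cauchy by blast
  obtain n0 where n0: "N \<le> n0" "e \<le> b n0" using freq by blast
  obtain m0 where m0: "n0 \<le> m0" "(b m0)\<^sup>2 < (e/2)\<^sup>2"
    using frequently_lt_if_weighted_summable[OF \<mu> S NS, of "(e/2)\<^sup>2" n0] e by auto
  then have ex: "\<exists>m\<ge>n0. b m < e/2"
    using e power2_less_imp_less[of "b m0" "e/2"] by auto
  define m where "m = (LEAST m. n0 \<le> m \<and> b m < e/2)"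
  have m: "n0 \<le> m" "b m < e/2"
    using LeastI_ex[OF ex] unfolding m_def by auto
  have above: "e/2 \<le> b k" if "n0 \<le> k" "k < m" for k
    using not_less_Least[of k "\<lambda>m. n0 \<le> m \<and> b m < e/2"] that unfolding m_def by auto
  have "e/2 < C' * (\<Sum>k=n0..<m. \<mu> k)"
    using diff_le_sum_if_decrements_le[where b=b and \<mu>=\<mu>, OF step' m(1)] n0(2) m(2) by linarith
  then have "e / (2 * C') < (\<Sum>k=n0..<m. \<mu> k)"
    using C' by (simp add: field_simps)
  then have "\<delta> < (e/2)\<^sup>2 * (\<Sum>k=n0..<m. \<mu> k)"
    unfolding \<delta>_def using e by (intro mult_strict_left_mono) auto
  also have "\<dots> \<le> (\<Sum>k=n0..<m. \<mu> k * (b k)\<^sup>2)"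
    unfolding sum_distrib_left
  proof (rule sum_mono)
    fix k assume "k \<in> {n0..<m}"
    then have "(e/2)\<^sup>2 \<le> (b k)\<^sup>2" using above e by (intro power_mono) auto
    then show "(e/2)\<^sup>2 * \<mu> k \<le> \<mu> k * (b k)\<^sup>2" using \<mu>[of k] by (simp add: mult.commute mult_left_mono)
  qed
  finally have "\<delta> < (\<Sum>k=n0..<m. \<mu> k * (b k)\<^sup>2)" .
  moreover have "(\<Sum>k=n0..<m. \<mu> k * (b k)\<^sup>2) < \<delta>" using N[OF n0(1), of m] by simp
  ultimately show False by simp
qed

lemma not_summable_if_not_summable_mult_compl:
  fixes \<theta> :: "nat \<Rightarrow> real"
  assumes "\<And>n. 0 \<le> \<theta> n" "\<And>n. \<theta> n \<le> 1" "\<not> summable (\<lambda>n. \<theta> n * (1 - \<theta> n))"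
  shows "\<not> summable \<theta>"
proof
  assume "summable \<theta>"
  moreover have "norm (\<theta> n * (1 - \<theta> n)) \<le> \<theta> n" for n
    using assms(1,2)[of n] mult_left_mono[of "1 - \<theta> n" 1 "\<theta> n"] by simp
  ultimately have "summable (\<lambda>n. \<theta> n * (1 - \<theta> n))"
    by (rule summable_comparison_test'[where N=0])
  then show False using assms(3) by contradiction
qed

section \<open>The iteration\<close>

locale parallel_splitting =
  fixes A :: "nat \<Rightarrow> 'a::{real_inner, complete_space} \<Rightarrow> 'a set"
    and r :: nat and \<gamma> \<beta> :: real and lam :: "nat \<Rightarrow> real"
    and q :: 'a and x :: "nat \<Rightarrow> nat \<Rightarrow> 'a" and p :: "nat \<Rightarrow> 'a"
  assumes r: "r \<ge> 1"
    and A: "\<And>i. i < r \<Longrightarrow> maximal_monotone (A i)"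
    and gamma: "\<gamma> > 0"
    and lam: "\<And>n. 0 \<le> lam n \<and> lam n \<le> 1"
    and lamsum: "\<not> summable (\<lambda>n. lam n * (1 - lam n))"
    and beta: "0 < \<beta>" "\<beta> < 1"
    and q: "q \<in> ran_id_plus (scale_op (\<gamma> / (2 * real r * (1 - \<beta>))) (sum_op r A))"
    and p: "\<And>n. p n = (1 / real r) *\<^sub>R (\<Sum>i<r. x i n)"
    and iter: "\<And>n i. i < r \<Longrightarrow> x i (Suc n) =
        (1 - lam n) *\<^sub>R x i n +
        lam n *\<^sub>R ((2 * \<beta>) *\<^sub>R resolvent (scale_op \<gamma> (perturb_op (- q) (A i)))
                                 ((2 * \<beta>) *\<^sub>R p n - x i n)
                        - ((2 * \<beta>) *\<^sub>R p n - x i n))"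
begin

definition J :: "nat \<Rightarrow> 'a \<Rightarrow> 'a" where
  "J i = resolvent (scale_op \<gamma> (perturb_op (- q) (A i)))"

definition T :: "(nat \<Rightarrow> 'a) \<Rightarrow> nat \<Rightarrow> 'a" where
  "T v i = (2 * \<beta>) *\<^sub>R J i ((2 * \<beta>) *\<^sub>R mean r v - v i) - ((2 * \<beta>) *\<^sub>R mean r v - v i)"

definition X :: "nat \<Rightarrow> nat \<Rightarrow> 'a" where
  "X n i = x i n"

definition fixpoint :: "(nat \<Rightarrow> 'a) \<Rightarrow> bool" where
  "fixpoint v \<longleftrightarrow> (\<forall>i<r. T v i = v i)"

definition zbar :: 'a where
  "zbar = resolvent (scale_op (\<gamma> / (2 * real r * (1 - \<beta>))) (sum_op r A)) q - q"

definition residual :: "nat \<Rightarrow> real" where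
  "residual n = sqdist r (T (X n)) (X n)"

lemma r_pos: "real r > 0"
  using r by simp

lemma lam_bounds: "0 \<le> lam n" "lam n \<le> 1"
  using lam by auto

lemma J_monotone: "monotone_op (scale_op \<gamma> (perturb_op (- q) (A i)))" if "i < r"
  using A[OF that] gamma unfolding maximal_monotone_def
  by (intro monotone_scale_op monotone_perturb_op) auto

lemma J_mem: "\<exists>u\<in>A i (J i y + q). y - J i y = \<gamma> *\<^sub>R u" if "i < r"
  using resolvent_scale_perturb_mem[OF A[OF that] gamma, where w="- q" and x=y]
  unfolding J_def scale_perturb_op_iff by simp

lemma J_eqI: "J i y = w" if "i < r" "u \<in> A i (w + q)" "y - w = \<gamma> *\<^sub>R u"
  unfolding J_def using J_monotone[OF that(1)]
  by (rule resolvent_eqI) (use that in \<open>auto simp: scale_perturb_op_iff\<close>)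

lemma J_firmly_nonexpansive: "(norm (J i a - J i b))\<^sup>2 \<le> (J i a - J i b) \<bullet> (a - b)" if "i < r"
  unfolding J_def using J_monotone[OF that]
  by (rule resolvent_firmly_nonexpansive)
    (intro resolvent_scale_perturb_mem[OF A[OF that] gamma])+

lemma T_sqdist_le:
  "sqdist r (T a) (T b) \<le> sqdist r a b - 4 * \<beta> * (1 - \<beta>) * real r * (norm (mean r a - mean r b))\<^sup>2"
proof -
  define d where "d = (\<lambda>i. a i - b i)"
  have mean_d: "mean r d = mean r a - mean r b" unfolding d_def by (rule mean_diff)
  have "sqdist r (T a) (T b) \<le> (\<Sum>i<r. (norm ((2 * \<beta>) *\<^sub>R mean r d - d i))\<^sup>2)"
    unfolding sqdist_def
  proof (rule sum_mono)
    fix i assume "i \<in> {..<r}"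
    then have i: "i < r" by simp
    define a' b' where "a' = (2 * \<beta>) *\<^sub>R mean r a - a i" and "b' = (2 * \<beta>) *\<^sub>R mean r b - b i"
    have "a' - b' = (2 * \<beta>) *\<^sub>R mean r d - d i"
      unfolding a'_def b'_def mean_d by (simp add: d_def algebra_simps)
    moreover have "T a i - T b i = (2 * \<beta>) *\<^sub>R (J i a' - J i b') - (a' - b')"
      unfolding T_def a'_def b'_def by (simp add: algebra_simps)
    ultimately show "(norm (T a i - T b i))\<^sup>2 \<le> (norm ((2 * \<beta>) *\<^sub>R mean r d - d i))\<^sup>2"
      using norm_sq_scaled_diff_le[OF J_firmly_nonexpansive[OF i] _ _, of \<beta> a' b'] beta by simp
  qed
  also have "\<dots> = sqdist r a b - 4 * \<beta> * (1 - \<beta>) * real r * (norm (mean r a - mean r b))\<^sup>2"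
    unfolding sum_norm_sq_scaled_mean_diff[OF r_pos[unfolded of_nat_0_less_iff]] unfolding mean_d
    by (simp add: sqdist_def d_def algebra_simps)
  finally show ?thesis .
qed

lemma T_nonexpansive: "sqdist r (T a) (T b) \<le> sqdist r a b"
proof -
  have "0 \<le> 4 * \<beta> * (1 - \<beta>) * real r * (norm (mean r a - mean r b))\<^sup>2"
    using beta by simp
  then show ?thesis using T_sqdist_le[of a b] by linarith
qed

lemma T_cong: "(\<And>j. j < r \<Longrightarrow> a j = b j) \<Longrightarrow> i < r \<Longrightarrow> T a i = T b i"
  unfolding T_def using mean_cong by metis

lemma p_eq_mean: "p n = mean r (X n)"
  unfolding p mean_def X_def ..

lemma X_step: "X (Suc n) i = (1 - lam n) *\<^sub>R X n i + lam n *\<^sub>R T (X n) i" if "i < r"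
  unfolding T_def J_def using iter[OF that, of n] by (simp add: X_def p_eq_mean)

lemma X_step_diff: "X (Suc n) i - X n i = lam n *\<^sub>R (T (X n) i - X n i)" if "i < r"
  using X_step[OF that, of n] by (simp add: algebra_simps)

lemma fixpoint_iff: "fixpoint v \<longleftrightarrow> (\<forall>i<r. J i ((2 * \<beta>) *\<^sub>R mean r v - v i) = mean r v)"
proof -
  have "T v i = v i \<longleftrightarrow> (2 * \<beta>) *\<^sub>R J i ((2 * \<beta>) *\<^sub>R mean r v - v i) = (2 * \<beta>) *\<^sub>R mean r v" for i
    unfolding T_def by (auto simp: algebra_simps)
  then show ?thesis using beta unfolding fixpoint_def by simp
qed

lemma scaled_sum_eq_neg_mean:
  assumes "\<And>i. i < r \<Longrightarrow> (2 * \<beta>) *\<^sub>R mean r v - v i - mean r v = \<gamma> *\<^sub>R u i"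
  shows "(\<gamma> / (2 * real r * (1 - \<beta>))) *\<^sub>R (\<Sum>i<r. u i) = - mean r v"
proof -
  have sum_v: "(\<Sum>i<r. v i) = real r *\<^sub>R mean r v" using r_pos by (simp add: mean_def)
  have "\<gamma> *\<^sub>R (\<Sum>i<r. u i) = (\<Sum>i<r. (2 * \<beta> - 1) *\<^sub>R mean r v - v i)"
    unfolding scaleR_sum_right
    by (rule sum.cong) (simp_all add: assms[symmetric] scaleR_diff_left algebra_simps)
  also have "\<dots> = (real r * (2 * \<beta> - 1) - real r) *\<^sub>R mean r v"
    by (simp add: sum_subtractf sum_v sum_constant_scaleR
        scaleR_diff_left[of "real r * (2 * \<beta> - 1)" "real r"])
  also have "\<dots> = (- 2 * real r * (1 - \<beta>)) *\<^sub>R mean r v"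
    by (rule arg_cong[where f="\<lambda>c. c *\<^sub>R mean r v"]) (simp add: algebra_simps)
  finally have "\<gamma> *\<^sub>R (\<Sum>i<r. u i) = (- 2 * real r * (1 - \<beta>)) *\<^sub>R mean r v" .
  then have "(1 / (2 * real r * (1 - \<beta>))) *\<^sub>R (\<gamma> *\<^sub>R (\<Sum>i<r. u i)) = - mean r v"
    using r_pos beta by simp
  then show ?thesis by simp
qed

lemma sum_op_monotone: "monotone_op (scale_op (\<gamma> / (2 * real r * (1 - \<beta>))) (sum_op r A))"
proof (rule monotone_scale_op)
  show "monotone_op (sum_op r A)"
    using A unfolding maximal_monotone_def by (intro monotone_sum_op) auto
  show "0 \<le> \<gamma> / (2 * real r * (1 - \<beta>))"
    using gamma beta r_pos by simp
qed

lemma fixpoint_mean: "mean r v = zbar" if "fixpoint v"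
proof -
  have "\<forall>i<r. \<exists>u. u \<in> A i (mean r v + q) \<and> (2 * \<beta>) *\<^sub>R mean r v - v i - mean r v = \<gamma> *\<^sub>R u"
    using that J_mem unfolding fixpoint_iff by metis
  then obtain u where u: "\<And>i. i < r \<Longrightarrow> u i \<in> A i (mean r v + q)"
    "\<And>i. i < r \<Longrightarrow> (2 * \<beta>) *\<^sub>R mean r v - v i - mean r v = \<gamma> *\<^sub>R u i"
    by metis
  have "q - (mean r v + q) \<in> scale_op (\<gamma> / (2 * real r * (1 - \<beta>))) (sum_op r A) (mean r v + q)"
    using scaled_sum_eq_neg_mean[OF u(2)] u(1)
    unfolding scale_op_def sum_op_def by force
  with sum_op_monotone
  have "resolvent (scale_op (\<gamma> / (2 * real r * (1 - \<beta>))) (sum_op r A)) q = mean r v + q"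
    by (rule resolvent_eqI)
  then show ?thesis by (simp add: zbar_def)
qed

lemma fixpoint_exists: "\<exists>v. fixpoint v"
proof -
  obtain y us where y: "q = y + (\<gamma> / (2 * real r * (1 - \<beta>))) *\<^sub>R (\<Sum>i<r. us i)"
    and us: "\<And>i. i < r \<Longrightarrow> us i \<in> A i y"
    using q unfolding ran_id_plus_def scale_op_def sum_op_def by blast
  define P where "P = y - q"
  define v where "v i = (2 * \<beta> - 1) *\<^sub>R P - \<gamma> *\<^sub>R us i" for i
  have "2 * real r * (1 - \<beta>) \<noteq> 0" using r_pos beta by simp
  then have "\<gamma> *\<^sub>R (\<Sum>i<r. us i)
      = (2 * real r * (1 - \<beta>)) *\<^sub>R ((\<gamma> / (2 * real r * (1 - \<beta>))) *\<^sub>R (\<Sum>i<r. us i))"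
    by simp
  also have "\<dots> = (- 2 * real r * (1 - \<beta>)) *\<^sub>R P"
    using y by (simp add: P_def)
  finally have \<gamma>_sum: "\<gamma> *\<^sub>R (\<Sum>i<r. us i) = (- 2 * real r * (1 - \<beta>)) *\<^sub>R P" .
  have "(\<Sum>i<r. v i) = real r *\<^sub>R ((2 * \<beta> - 1) *\<^sub>R P) - \<gamma> *\<^sub>R (\<Sum>i<r. us i)"
    by (simp add: v_def sum_subtractf scaleR_sum_right sum_constant_scaleR)
  also have "\<dots> = (real r * (2 * \<beta> - 1) + 2 * real r * (1 - \<beta>)) *\<^sub>R P"
    unfolding \<gamma>_sum by (simp add: scaleR_add_left)
  also have "\<dots> = real r *\<^sub>R P"
    by (rule arg_cong[where f="\<lambda>c. c *\<^sub>R P"]) (simp add: algebra_simps)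
  finally have mean: "mean r v = P"
    using r_pos unfolding mean_def by simp
  have "J i ((2 * \<beta>) *\<^sub>R P - v i) = P" if "i < r" for i
    using that us[OF that] by (intro J_eqI) (auto simp: P_def v_def algebra_simps)
  then have "fixpoint v" unfolding fixpoint_iff mean by blast
  then show ?thesis by blast
qed

lemma residual_nonneg: "0 \<le> residual n"
  unfolding residual_def by (rule sqdist_nonneg)

lemma fejer_step:
  assumes v: "fixpoint v"
  shows "sqdist r (X (Suc n)) v \<le> sqdist r (X n) v - lam n * (1 - lam n) * residual n
    - lam n * (4 * \<beta> * (1 - \<beta>) * real r) * (norm (p n - zbar))\<^sup>2"
proof -
  have Tv: "T v i = v i" if "i < r" for i using v that unfolding fixpoint_def by blast
  have "(norm (X (Suc n) i - v i))\<^sup>2 = (1 - lam n) * (norm (X n i - v i))\<^sup>2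
      + lam n * (norm (T (X n) i - T v i))\<^sup>2 - lam n * (1 - lam n) * (norm (T (X n) i - X n i))\<^sup>2"
    if i: "i < r" for i
  proof -
    have "X (Suc n) i - v i = (1 - lam n) *\<^sub>R (X n i - v i) + lam n *\<^sub>R (T (X n) i - T v i)"
      unfolding X_step[OF i] Tv[OF i] by (simp add: algebra_simps)
    moreover have "(X n i - v i) - (T (X n) i - T v i) = - (T (X n) i - X n i)"
      unfolding Tv[OF i] by simp
    ultimately show ?thesis
      using norm_sq_convex_combination[of "lam n" "X n i - v i" "T (X n) i - T v i"]
      by (simp only: norm_minus_cancel)
  qed
  then have "sqdist r (X (Suc n)) v = (1 - lam n) * sqdist r (X n) v
      + lam n * sqdist r (T (X n)) (T v) - lam n * (1 - lam n) * residual n"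
    unfolding sqdist_def residual_def
    by (simp add: sum.distrib sum_subtractf sum_distrib_left)
  also have "\<dots> \<le> (1 - lam n) * sqdist r (X n) v
      + lam n * (sqdist r (X n) v - 4 * \<beta> * (1 - \<beta>) * real r * (norm (mean r (X n) - mean r v))\<^sup>2)
      - lam n * (1 - lam n) * residual n"
    using mult_left_mono[OF T_sqdist_le lam_bounds(1)] by simp
  finally show ?thesis
    unfolding p_eq_mean fixpoint_mean[OF v] by (simp add: algebra_simps)
qed

lemma sqdist_fixpoint_decreasing: "sqdist r (X (Suc n)) v \<le> sqdist r (X n) v" if "fixpoint v"
proof -
  have "0 \<le> lam n * (1 - lam n) * residual n"
    using lam_bounds[of n] residual_nonneg by simp
  moreover have "0 \<le> lam n * (4 * \<beta> * (1 - \<beta>) * real r) * (norm (p n - zbar))\<^sup>2"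
    using lam_bounds[of n] beta by simp
  ultimately show ?thesis using fejer_step[OF that, of n] by linarith
qed

lemma sqdist_fixpoint_convergent: "convergent (\<lambda>n. sqdist r (X n) v)" if "fixpoint v"
proof -
  have "decseq (\<lambda>n. sqdist r (X n) v)"
    using sqdist_fixpoint_decreasing[OF that] by (rule decseq_SucI)
  moreover have "\<forall>n. 0 \<le> sqdist r (X n) v" by (simp add: sqdist_nonneg)
  ultimately show ?thesis
    by (rule decseq_convergent) (auto simp: convergent_def)
qed

lemma sqdist_fixpoint_le: "sqdist r (X n) v \<le> sqdist r (X 0) v" if "fixpoint v"
  by (induction n) (auto intro: order_trans[OF sqdist_fixpoint_decreasing[OF that]])

lemma
  shows summable_residual: "summable (\<lambda>n. lam n * (1 - lam n) * residual n)"
    and summable_mean_dist: "summable (\<lambda>n. lam n * (norm (p n - zbar))\<^sup>2)"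
proof -
  obtain v where v: "fixpoint v" using fixpoint_exists by blast
  define \<kappa> where "\<kappa> = 4 * \<beta> * (1 - \<beta>) * real r"
  have \<kappa>: "\<kappa> > 0" using beta r_pos by (simp add: \<kappa>_def)
  define a where "a = (\<lambda>n. lam n * (1 - lam n) * residual n)"
  define b where "b = (\<lambda>n. lam n * (norm (p n - zbar))\<^sup>2)"
  have a: "0 \<le> a n" and b: "0 \<le> b n" for n
    using lam_bounds[of n] residual_nonneg by (simp_all add: a_def b_def)
  have tele: "(\<Sum>k<n. a k + \<kappa> * b k) \<le> sqdist r (X 0) v - sqdist r (X n) v" for n
  proof (induction n)
    case (Suc n)
    then show ?case using fejer_step[OF v, of n] by (simp add: a_def b_def \<kappa>_def algebra_simps)
  qed simp
  have "(\<Sum>k<n. a k + \<kappa> * b k) \<le> sqdist r (X 0) v" for n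
    using tele[of n] sqdist_nonneg[of r "X n" v] by linarith
  then have sum: "summable (\<lambda>k. a k + \<kappa> * b k)"
    by (intro summableI_nonneg_bounded[where x="sqdist r (X 0) v"]) (use a b \<kappa> in auto)
  have "0 \<le> \<kappa> * b n" for n using \<kappa> b[of n] by simp
  then have "norm (a n) \<le> a n + \<kappa> * b n" for n using a[of n] by simp
  then have "summable a" by (rule summable_comparison_test'[OF sum])
  then show "summable (\<lambda>n. lam n * (1 - lam n) * residual n)" unfolding a_def .
  have "norm (b n) \<le> (a n + \<kappa> * b n) / \<kappa>" for n
    using a[of n] b[of n] \<kappa> by (simp add: field_simps)
  then have "summable b" by (rule summable_comparison_test'[OF summable_divide[OF sum]])
  then show "summable (\<lambda>n. lam n * (norm (p n - zbar))\<^sup>2)" unfolding b_def .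
qed

lemma sqdist_T_step_le: "sqdist r (T (X (Suc n))) (T (X n)) \<le> (lam n)\<^sup>2 * residual n"
proof -
  have "sqdist r (T (X (Suc n))) (T (X n)) \<le> sqdist r (X (Suc n)) (X n)"
    by (rule T_nonexpansive)
  also have "\<dots> = (lam n)\<^sup>2 * residual n"
    unfolding sqdist_def residual_def sum_distrib_left
    by (rule sum.cong) (simp_all add: X_step_diff power_mult_distrib)
  finally show ?thesis .
qed

lemma residual_decreasing: "residual (Suc n) \<le> residual n"
proof (cases "lam n = 0")
  case True
  then have eq: "X (Suc n) i = X n i" if "i < r" for i using X_step[OF that] by simp
  have "residual (Suc n) = residual n"
    unfolding residual_def sqdist_def by (rule sum.cong) (simp_all add: eq T_cong[OF eq])
  then show ?thesis by simp
next
  case False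
  then have l: "lam n > 0" using lam_bounds[of n] by simp
  define e where "e i = T (X n) i - X n i" for i
  define u where "u i = (1 / lam n) *\<^sub>R (T (X (Suc n)) i - T (X n) i)" for i
  have "residual (Suc n) \<le> (\<Sum>i<r. (1 - lam n) * (norm (e i))\<^sup>2 + lam n * (norm (u i))\<^sup>2)"
    unfolding residual_def sqdist_def
  proof (rule sum_mono)
    fix i assume "i \<in> {..<r}"
    then have "T (X (Suc n)) i - X (Suc n) i = (1 - lam n) *\<^sub>R e i + lam n *\<^sub>R u i"
      using l X_step[of i n] by (simp add: e_def u_def algebra_simps)
    then have "(norm (T (X (Suc n)) i - X (Suc n) i))\<^sup>2
        = (1 - lam n) * (norm (e i))\<^sup>2 + lam n * (norm (u i))\<^sup>2
          - lam n * (1 - lam n) * (norm (e i - u i))\<^sup>2"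
      by (simp only: norm_sq_convex_combination)
    moreover have "0 \<le> lam n * (1 - lam n) * (norm (e i - u i))\<^sup>2"
      using lam_bounds[of n] by simp
    ultimately show "(norm (T (X (Suc n)) i - X (Suc n) i))\<^sup>2
        \<le> (1 - lam n) * (norm (e i))\<^sup>2 + lam n * (norm (u i))\<^sup>2"
      by linarith
  qed
  also have "\<dots> = (1 - lam n) * residual n + lam n * (\<Sum>i<r. (norm (u i))\<^sup>2)"
    unfolding residual_def sqdist_def e_def by (simp add: sum.distrib sum_distrib_left)
  finally have "residual (Suc n) \<le> (1 - lam n) * residual n + lam n * (\<Sum>i<r. (norm (u i))\<^sup>2)" .
  moreover have "(lam n)\<^sup>2 * (\<Sum>i<r. (norm (u i))\<^sup>2) \<le> (lam n)\<^sup>2 * residual n"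
  proof -
    have "(lam n)\<^sup>2 * (\<Sum>i<r. (norm (u i))\<^sup>2) = sqdist r (T (X (Suc n))) (T (X n))"
      using l by (simp add: u_def sqdist_def sum_distrib_left power_divide)
    then show ?thesis using sqdist_T_step_le by simp
  qed
  then have "(\<Sum>i<r. (norm (u i))\<^sup>2) \<le> residual n" using l by simp
  then have "lam n * (\<Sum>i<r. (norm (u i))\<^sup>2) \<le> lam n * residual n"
    using l by (simp add: mult_left_mono)
  ultimately show ?thesis by (simp add: algebra_simps)
qed

lemma residual_tendsto_zero: "residual \<longlonglongrightarrow> 0"
proof (rule decseq_tendsto_zero_if_weighted_summable)
  show "decseq residual" using residual_decreasing by (rule decseq_SucI)
  show "0 \<le> lam n * (1 - lam n)" for n using lam_bounds[of n] by simp
qed (use residual_nonneg summable_residual lamsum in auto)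

lemma norm_T_diff_le: "norm (T (X n) i - X n i) \<le> sqrt (residual n)" if "i < r"
  unfolding residual_def using that by (intro real_le_rsqrt norm_sq_le_sqdist)

lemma T_diff_tendsto_zero: "(\<lambda>n. T (X n) i - X n i) \<longlonglongrightarrow> 0" if "i < r"
proof (rule Lim_null_comparison)
  show "\<forall>\<^sub>F n in sequentially. norm (T (X n) i - X n i) \<le> sqrt (residual n)"
    using norm_T_diff_le[OF that] by simp
  show "(\<lambda>n. sqrt (residual n)) \<longlonglongrightarrow> 0"
    using tendsto_real_sqrt[OF residual_tendsto_zero] by simp
qed

lemma increments_tendsto_zero: "(\<lambda>n. x i (Suc n) - x i n) \<longlonglongrightarrow> 0" if "i < r"
proof (rule Lim_null_comparison)
  show "\<forall>\<^sub>F n in sequentially. norm (x i (Suc n) - x i n) \<le> norm (T (X n) i - X n i)"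
    using X_step_diff[OF that] lam_bounds by (simp add: X_def mult_left_le_one_le)
  show "(\<lambda>n. norm (T (X n) i - X n i)) \<longlonglongrightarrow> 0"
    using tendsto_norm_zero[OF T_diff_tendsto_zero[OF that]] .
qed

lemma p_tendsto: "p \<longlonglongrightarrow> zbar"
proof -
  define b where "b n = norm (p n - zbar)" for n
  have step: "\<bar>b (Suc n) - b n\<bar> \<le> sqrt (residual 0) * lam n" for n
  proof -
    have "\<bar>b (Suc n) - b n\<bar> \<le> norm (p (Suc n) - p n)"
      unfolding b_def using norm_triangle_ineq3[of "p (Suc n) - zbar" "p n - zbar"] by simp
    also have "p (Suc n) - p n = mean r (\<lambda>i. lam n *\<^sub>R (T (X n) i - X n i))"
      unfolding p_eq_mean mean_diff[symmetric] by (rule mean_cong) (rule X_step_diff)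
    also have "norm \<dots> \<le> lam n * sqrt (residual 0)"
    proof (rule norm_mean_le)
      fix i assume "i < r"
      have "sqrt (residual n) \<le> sqrt (residual 0)"
        using decseqD[OF decseq_SucI[of residual, OF residual_decreasing], of 0 n] by simp
      with norm_T_diff_le[OF \<open>i < r\<close>, of n]
      have "norm (T (X n) i - X n i) \<le> sqrt (residual 0)" by (rule order_trans)
      then show "norm (lam n *\<^sub>R (T (X n) i - X n i)) \<le> lam n * sqrt (residual 0)"
        using lam_bounds(1)[of n] by (simp add: mult_left_mono)
    qed (use r_pos in simp)
    finally show ?thesis by (simp add: mult.commute)
  qed
  have "b \<longlonglongrightarrow> 0"
  proof (rule tendsto_zero_if_weighted_summable_sq[where \<mu>=lam and C="sqrt (residual 0)"])
    show "0 \<le> b n" for n by (simp add: b_def)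
    show "0 \<le> lam n" for n by (rule lam_bounds)
    show "summable (\<lambda>n. lam n * (b n)\<^sup>2)" using summable_mean_dist by (simp add: b_def)
    show "\<not> summable lam"
      using lam_bounds lamsum by (rule not_summable_if_not_summable_mult_compl)
  qed (rule step)
  then have "(\<lambda>n. p n - zbar) \<longlonglongrightarrow> 0" unfolding b_def by (rule tendsto_norm_zero_cancel)
  then show ?thesis by (rule LIM_zero_cancel)
qed

lemma J_iterate_tendsto: "(\<lambda>n. J i ((2 * \<beta>) *\<^sub>R p n - x i n)) \<longlonglongrightarrow> zbar" if i: "i < r"
proof -
  have "J i ((2 * \<beta>) *\<^sub>R p n - x i n) = p n + (1 / (2 * \<beta>)) *\<^sub>R (T (X n) i - X n i)" for n
    using beta unfolding T_def p_eq_mean X_def by (simp add: algebra_simps)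
  moreover have "(\<lambda>n. p n + (1 / (2 * \<beta>)) *\<^sub>R (T (X n) i - X n i)) \<longlonglongrightarrow> zbar + (1 / (2 * \<beta>)) *\<^sub>R 0"
    by (intro tendsto_add tendsto_scaleR tendsto_const p_tendsto T_diff_tendsto_zero[OF i])
  ultimately show ?thesis by simp
qed

lemma X_bounded: "bounded (range (\<lambda>n. X n i))" if "i < r"
proof -
  obtain v where v: "fixpoint v" using fixpoint_exists by blast
  have "(norm (X n i - v i))\<^sup>2 \<le> sqdist r (X 0) v" for n
    using norm_sq_le_sqdist[OF that] sqdist_fixpoint_le[OF v] by (rule order_trans)
  then have dist: "norm (X n i - v i) \<le> sqrt (sqdist r (X 0) v)" for n
    by (rule real_le_rsqrt)
  have "norm (X n i) \<le> norm (v i) + sqrt (sqdist r (X 0) v)" for n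
    using dist[of n] norm_triangle_sub[of "X n i" "v i"] by linarith
  then show ?thesis unfolding bounded_iff by blast
qed

lemma weak_cluster_point_fixpoint:
  assumes \<sigma>: "strict_mono \<sigma>" and w: "\<And>i. i < r \<Longrightarrow> weak_conv (\<lambda>n. X (\<sigma> n) i) (L i)"
  shows "fixpoint L"
proof -
  have p\<sigma>: "(\<lambda>n. p (\<sigma> n)) \<longlonglongrightarrow> zbar"
    using LIMSEQ_subseq_LIMSEQ[OF p_tendsto \<sigma>] by (simp add: o_def)
  have "weak_conv (\<lambda>n. p (\<sigma> n)) (mean r L)"
    unfolding p_eq_mean mean_def
    by (intro weak_conv_scaleR weak_conv_sum[of "{..<r}" "\<lambda>i n. X (\<sigma> n) i" L]) (use w in auto)
  then have mean: "mean r L = zbar"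
    using tendsto_imp_weak_conv[OF p\<sigma>] by (rule weak_conv_unique)
  have "J i ((2 * \<beta>) *\<^sub>R zbar - L i) = zbar" if i: "i < r" for i
  proof -
    define j where "j n = J i ((2 * \<beta>) *\<^sub>R p n - x i n)" for n
    define u where "u n = (1 / \<gamma>) *\<^sub>R ((2 * \<beta>) *\<^sub>R p n - x i n - j n)" for n
    have u: "u n \<in> A i (j n + q)" for n
      using J_mem[OF i, of "(2 * \<beta>) *\<^sub>R p n - x i n"] gamma unfolding u_def j_def by auto
    have j\<sigma>: "(\<lambda>n. j (\<sigma> n)) \<longlonglongrightarrow> zbar"
      using LIMSEQ_subseq_LIMSEQ[OF J_iterate_tendsto[OF i] \<sigma>] by (simp add: j_def o_def)
    have x\<sigma>: "weak_conv (\<lambda>n. x i (\<sigma> n)) (L i)" using w[OF i] by (simp add: X_def)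
    have u_weak: "weak_conv (\<lambda>n. u (\<sigma> n)) ((1 / \<gamma>) *\<^sub>R ((2 * \<beta>) *\<^sub>R zbar - L i - zbar))"
      unfolding u_def
      by (intro weak_conv_scaleR weak_conv_diff x\<sigma> tendsto_imp_weak_conv j\<sigma> tendsto_scaleR
          tendsto_const p\<sigma>)
    have u_bounded: "bounded (range (\<lambda>n. u (\<sigma> n)))"
    proof -
      have "bounded (range (\<lambda>n. x i (\<sigma> n)))"
        using X_bounded[OF i] by (rule bounded_subset) (auto simp: X_def)
      then show ?thesis
        unfolding u_def
        by (intro bounded_scaleR_comp bounded_minus_comp convergent_imp_bounded[OF j\<sigma>]
            convergent_imp_bounded[OF p\<sigma>])
          (simp_all add: image_image)
    qed
    have "(\<lambda>n. j (\<sigma> n) + q) \<longlonglongrightarrow> zbar + q"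
      using j\<sigma> by (rule tendsto_add[OF _ tendsto_const])
    then have "(1 / \<gamma>) *\<^sub>R ((2 * \<beta>) *\<^sub>R zbar - L i - zbar) \<in> A i (zbar + q)"
      using u_weak u_bounded by (rule maximal_monotone_demiclosed[OF A[OF i] u])
    then show ?thesis
      by (rule J_eqI[OF i]) (use gamma in simp)
  qed
  then show ?thesis unfolding fixpoint_iff mean by blast
qed

lemma weak_convergence: "\<exists>L. (\<forall>i<r. weak_conv (\<lambda>n. x i n) (L i)) \<and> mean r L = zbar"
proof -
  have "\<exists>L. fixpoint L \<and> (\<forall>i<r. weak_conv (\<lambda>n. X n i) (L i))"
    using opial_tuple[OF X_bounded sqdist_fixpoint_convergent weak_cluster_point_fixpoint] .
  then show ?thesis using fixpoint_mean by (auto simp: X_def)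
qed

end

theorem theorem4p3:
  fixes A :: "nat \<Rightarrow> 'a::{real_inner, complete_space} \<Rightarrow> 'a set"
    and r :: nat and \<gamma> \<beta> :: real and lam :: "nat \<Rightarrow> real"
    and q :: 'a and x :: "nat \<Rightarrow> nat \<Rightarrow> 'a" and p :: "nat \<Rightarrow> 'a"
  assumes r: "r \<ge> 1"
    and A: "\<And>i. i < r \<Longrightarrow> maximal_monotone (A i)"
    and gamma: "\<gamma> > 0"
    and lam: "\<And>n. 0 \<le> lam n \<and> lam n \<le> 1"
    and lamsum: "\<not> summable (\<lambda>n. lam n * (1 - lam n))"
    and beta: "0 < \<beta>" "\<beta> < 1"
    and q: "q \<in> ran_id_plus (scale_op (\<gamma> / (2 * real r * (1 - \<beta>))) (sum_op r A))"
    and p: "\<And>n. p n = (1 / real r) *\<^sub>R (\<Sum>i<r. x i n)"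
    and iter: "\<And>n i. i < r \<Longrightarrow> x i (Suc n) =
        (1 - lam n) *\<^sub>R x i n +
        lam n *\<^sub>R ((2 * \<beta>) *\<^sub>R resolvent (scale_op \<gamma> (perturb_op (- q) (A i)))
                                 ((2 * \<beta>) *\<^sub>R p n - x i n)
                        - ((2 * \<beta>) *\<^sub>R p n - x i n))"
  shows "(\<forall>i<r. (\<lambda>n. x i (Suc n) - x i n) \<longlonglongrightarrow> 0)
    \<and> (\<exists>xs. (\<forall>i<r. weak_conv (\<lambda>n. x i n) (xs i)) \<and>
         q + (1 / real r) *\<^sub>R (\<Sum>i<r. xs i)
           = resolvent (scale_op (\<gamma> / (2 * real r * (1 - \<beta>))) (sum_op r A)) q)
    \<and> (\<lambda>n. q + p n) \<longlonglongrightarrow> resolvent (scale_op (\<gamma> / (2 * real r * (1 - \<beta>))) (sum_op r A)) q"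
proof -
  interpret parallel_splitting A r \<gamma> \<beta> lam q x p
    by unfold_locales (use assms in auto)
  have resolvent_eq: "resolvent (scale_op (\<gamma> / (2 * real r * (1 - \<beta>))) (sum_op r A)) q = q + zbar"
    by (simp add: zbar_def)
  obtain L where L: "(\<forall>i<r. weak_conv (\<lambda>n. x i n) (L i)) \<and> mean r L = zbar"
    using weak_convergence ..
  have "\<forall>i<r. (\<lambda>n. x i (Suc n) - x i n) \<longlonglongrightarrow> 0"
    using increments_tendsto_zero by simp
  moreover have "\<exists>xs. (\<forall>i<r. weak_conv (\<lambda>n. x i n) (xs i))
      \<and> q + (1 / real r) *\<^sub>R (\<Sum>i<r. xs i) = q + zbar"
    using L unfolding mean_def by (intro exI[of _ L]) simp
  moreover have "(\<lambda>n. q + p n) \<longlonglongrightarrow> q + zbar"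
    by (intro tendsto_add tendsto_const p_tendsto)
  ultimately show ?thesis unfolding resolvent_eq by (intro conjI)
qed

end
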